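(* Let $\rho>0$, $\alpha>0$, $\Omega_t\in\mathbb{S}^n$, $\bar W_t\in\mathbb{S}^n_+$ with $\operatorname{tr}(\bar W_t)=1$, $P_t\in\mathbb{R}^{n\times r}$ with $P_t^\top P_t=I_r$, and integers $r_p\ge0$, $r_c\ge1$ with $r_p\le r$. Let $(W_t^\star,y_t^\star)$ be a minimizer of $\min_{W\in\hat{\mathcal W}(\bar W_t,P_t),y\in\mathbb{R}^m}\langle W-C,\Omega_t\rangle-\langle b-\mathcal{A}(\Omega_t),y\rangle+\frac1{2\alpha}\|W-C+\mathcal{A}^*(y)\|^2$, written as $W_t^\star=\gamma_t^\star\bar W_t+P_tS_t^\star P_t^\top$ with $S_t^\star\in\mathbb{S}^r_+$, $\gamma_t^\star\ge0$, $\gamma_t^\star+\operatorname{tr}(S_t^\star)\le\rho$, and let $X_{t+1}^\star:=\Omega_t+\frac1\alpha(W_t^\star-C+\mathcal{A}^*(y_t^\star))$. Write an eigendecomposition $S_t^\star=Q_1\Sigma_1Q_1^\top+Q_2\Sigma_2Q_2^\top$ where $[Q_1\ Q_2]$ is orthogonal, $\Sigma_1\in\mathbb{S}^{r_p}$ is diagonal with the $r_p$ largest eigenvalues of $S_t^\star$ and $\Sigma_2$ diagonal with the remaining ones. Let $V_t\in\mathbb{R}^{n\times r_c}$ have orthonormal columns that are eigenvectors of $-X_{t+1}^\star$ for its $r_c$ largest eigenvalues. Let $P_{t+1}$ be any matrix with orthonormal columns whose column space equals that of $[V_t\ \ P_tQ_1]$, assume $\gamma_t^\star+\operatorname{tr}(\Sigma_2)>0$,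 and set $\bar W_{t+1}:=\frac{1}{\gamma_t^\star+\operatorname{tr}(\Sigma_2)}\big(\gamma_t^\star\bar W_t+P_tQ_2\Sigma_2Q_2^\top P_t^\top\big)$. Then, writing $\hat F_{t}:=\hat F_{(\bar W_t,P_t)}$ and $\hat F_{t+1}:=\hat F_{(\bar W_{t+1},P_{t+1})}$: (i) $\hat F_{t+1}(X)\le F(X)$ for all $X\in\mathbb{S}^n$; (ii) $\hat F_{t+1}(X)\ge F(X_{t+1}^\star)+\langle g,X-X_{t+1}^\star\rangle$ for all $X\in\mathbb{S}^n$, where $g=C-\rho vv^\top$ with $v$ the first column of $V_t$ if $\lambda_{\max}(-X_{t+1}^\star)>0$, and $g=C$ otherwise (in both cases $g\in\partial F(X_{t+1}^\star)$); (iii) if $\mathcal{A}(\Omega_t)$ is arbitrary but $X\in\mathcal{X}_0$, then $\hat F_{t+1}(X)\ge \hat F_t(X_{t+1}^\star)+\langle \alpha(\Omega_t-X_{t+1}^\star),X-X_{t+1}^\star\rangle$ for all $X\in\mathcal{X}_0$.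
   Context: Data: $b\in\mathbb{R}^m$, $C,A_1,\dots,A_m\in\mathbb{S}^n$ with $A_1,\dots,A_m$ linearly independent; $\langle X,Y\rangle=\operatorname{tr}(XY)$, $\|\cdot\|$ Frobenius norm; $\mathcal{A}(X)=(\langle A_i,X\rangle)_{i=1}^m$, $\mathcal{A}^*(y)=\sum_iy_iA_i$; $\mathcal{X}_0:=\{X\in\mathbb{S}^n:\mathcal{A}(X)=b\}$. $F(X):=\langle C,X\rangle+\rho\max\{\lambda_{\max}(-X),0\}$. For $\bar W\succeq0$ with trace $1$ and $P$ with orthonormal columns ($k$ columns): $\hat{\mathcal W}(\bar W,P):=\{\gamma\bar W+PSP^\top: S\in\mathbb{S}^k_+,\gamma\ge0,\gamma+\operatorname{tr}(S)\le\rho\}$ and $\hat F_{(\bar W,P)}(X):=\langle C,X\rangle+\max_{W\in\hat{\mathcal W}(\bar W,P)}\langle W,-X\rangle$. ($X_{t+1}^\star$ is the minimizer over $\mathcal{X}_0$ of $\hat F_t(X)+\frac\alpha2\|X-\Omega_t\|^2$.) *)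

theory Defs
  imports "Jordan_Normal_Form.Matrix" "Jordan_Normal_Form.Char_Poly"
begin

definition mtrace :: "real mat \<Rightarrow> real" where
  "mtrace A = (\<Sum>i<dim_row A. A $$ (i, i))"

definition frob :: "real mat \<Rightarrow> real mat \<Rightarrow> real" where
  "frob X Y = mtrace (X * Y)"

definition fnorm :: "real mat \<Rightarrow> real" where
  "fnorm X = sqrt (frob (transpose_mat X) X)"

definition symm :: "nat \<Rightarrow> real mat \<Rightarrow> bool" where
  "symm k X \<longleftrightarrow> X \<in> carrier_mat k k \<and> transpose_mat X = X"

definition psd :: "nat \<Rightarrow> real mat \<Rightarrow> bool" where
  "psd k X \<longleftrightarrow> symm k X \<and> (\<forall>v \<in> carrier_vec k. 0 \<le> v \<bullet> (X *\<^sub>v v))"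

definition diagonal :: "real mat \<Rightarrow> bool" where
  "diagonal D \<longleftrightarrow> (\<forall>i<dim_row D. \<forall>j<dim_col D. i \<noteq> j \<longrightarrow> D $$ (i, j) = 0)"

definition lmax :: "real mat \<Rightarrow> real" where
  "lmax X = Max {k. eigenvalue X k}"

definition hcat :: "real mat \<Rightarrow> real mat \<Rightarrow> real mat" where
  "hcat A B = mat (dim_row A) (dim_col A + dim_col B)
     (\<lambda>(i, j). if j < dim_col A then A $$ (i, j) else B $$ (i, j - dim_col A))"

definition colspace :: "real mat \<Rightarrow> real vec set" where
  "colspace M = {M *\<^sub>v x | x. x \<in> carrier_vec (dim_col M)}"

definition outer :: "real vec \<Rightarrow> real mat" where
  "outer v = mat (dim_vec v) (dim_vec v) (\<lambda>(i, j). v $ i * v $ j)"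

definition Aop :: "nat \<Rightarrow> (nat \<Rightarrow> real mat) \<Rightarrow> real mat \<Rightarrow> real vec" where
  "Aop m A X = vec m (\<lambda>i. frob (A i) X)"

definition Astar :: "nat \<Rightarrow> nat \<Rightarrow> (nat \<Rightarrow> real mat) \<Rightarrow> real vec \<Rightarrow> real mat" where
  "Astar n m A y = mat n n (\<lambda>(i, j). \<Sum>k<m. y $ k * A k $$ (i, j))"

definition Fobj :: "real \<Rightarrow> real mat \<Rightarrow> real mat \<Rightarrow> real" where
  "Fobj \<rho> C X = frob C X + \<rho> * max (lmax (- X)) 0"

definition What :: "real \<Rightarrow> real mat \<Rightarrow> real mat \<Rightarrow> real mat set" where
  "What \<rho> Wb P = {\<gamma> \<cdot>\<^sub>m Wb + P * S * transpose_mat P | \<gamma> S.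
      psd (dim_col P) S \<and> 0 \<le> \<gamma> \<and> \<gamma> + mtrace S \<le> \<rho>}"

definition Fhat :: "real \<Rightarrow> real mat \<Rightarrow> real mat \<Rightarrow> real mat \<Rightarrow> real mat \<Rightarrow> real" where
  "Fhat \<rho> C Wb P X = frob C X + (SUP W \<in> What \<rho> Wb P. frob W (- X))"

end

theory Submission
  imports Defs "HOL-Analysis.Function_Topology"
begin

(* Write Xs for the prox point X_{t+1} and Ws for the optimal W_t.  Every W in a model set
   hat W(bar W, P) is PSD with trace at most rho, hence <W,-X> <= tr W lambda_max(-X) <=
   rho max{lambda_max(-X), 0}; this gives (i), and each such W yields the affine minorant
   <C,X> + <W,-X> of hat F_(bar W, P).
   For (ii), the matrix rho v v^T (or 0 when lambda_max(-Xs) <= 0) lies in the new model set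
   because v lies in the range of P_{t+1}; it attains the maximum defining F at Xs, so its minorant
   touches F there.
   For (iii), the aggregation is designed so that Ws = (gamma + tr Sigma2) bar W_{t+1} +
   (P Q1) Sigma1 (P Q1)^T still lies in the new model set.  First-order optimality of the prox
   subproblem in W says that Ws maximizes <W,-Xs> over the old model set, so
   hat F_t(Xs) = <C,Xs> + <Ws,-Xs>; optimality in y gives A(Xs) = b, so on X_0 the term A^*(y)
   in alpha (Omega - Xs) = C - Ws - A^*(y) is invisible. *)

lemma affine_nonneg_imp_slope_zero:
  fixes a c :: real
  assumes "\<And>t. 0 \<le> c + a * t"
  shows "a = 0"
proof (rule ccontr)
  assume a: "a \<noteq> 0"
  have "0 \<le> c + a * (- (\<bar>c\<bar> + 1) / a)" by (rule assms)
  also have "c + a * (- (\<bar>c\<bar> + 1) / a) = c - \<bar>c\<bar> - 1" using a by (simp add: field_simps)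
  finally show False by linarith
qed

lemma quadratic_nonpos_imp_linear_coeff_zero:
  fixes a b :: real
  assumes "\<And>t. a * t + b * t\<^sup>2 \<le> 0"
  shows "a = 0"
proof (rule ccontr)
  assume a: "a \<noteq> 0"
  define c where "c = \<bar>b\<bar> + 1"
  have c: "c > 0" and bc: "2 * c + b > 0" unfolding c_def by (auto simp: abs_if)
  define t where "t = a / (2 * c)"
  have "a * t + b * t\<^sup>2 = a\<^sup>2 * (2 * c + b) / (4 * c\<^sup>2)"
    unfolding t_def using c by (simp add: power2_eq_square field_simps)
  also have "\<dots> > 0" using a c bc by simp
  finally show False using assms[of t] by linarith
qed

lemma quadratic_nonneg_near_zero_imp_linear_coeff_nonneg:
  fixes a b :: real
  assumes "\<And>s. 0 < s \<Longrightarrow> s \<le> 1 \<Longrightarrow> 0 \<le> a * s + b * s\<^sup>2"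
  shows "0 \<le> a"
proof (rule ccontr)
  assume a: "\<not> 0 \<le> a"
  define s where "s = min 1 (- a / (2 * (\<bar>b\<bar> + 1)))"
  have d: "2 * (\<bar>b\<bar> + 1) > 0" by simp
  have "0 < - a / (2 * (\<bar>b\<bar> + 1))" using a d by (intro divide_pos_pos) auto
  hence sp: "0 < s" and s1: "s \<le> 1" unfolding s_def by auto
  have "\<bar>b\<bar> * s \<le> (\<bar>b\<bar> + 1) * s" using sp by (simp add: mult_right_mono)
  also have "\<dots> \<le> (\<bar>b\<bar> + 1) * (- a / (2 * (\<bar>b\<bar> + 1)))"
    unfolding s_def by (intro mult_left_mono) auto
  also have "\<dots> = - a / 2" using d by (simp add: field_simps)
  finally have bs: "\<bar>b\<bar> * s \<le> - a / 2" .
  have "b * s\<^sup>2 \<le> \<bar>b\<bar> * s * s" using sp by (simp add: power2_eq_square mult_right_mono)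
  also have "\<dots> \<le> (- a / 2) * s" using mult_right_mono[OF bs less_imp_le[OF sp]] by simp
  finally have "a * s + b * s\<^sup>2 \<le> (a / 2) * s" by (simp add: algebra_simps)
  also have "\<dots> < 0" using a sp by (simp add: mult_neg_pos)
  finally show False using assms[OF sp s1] by linarith
qed

section \<open>Quadratic forms, the Rayleigh quotient and sums of squares\<close>

definition qform :: "nat \<Rightarrow> (nat \<Rightarrow> nat \<Rightarrow> real) \<Rightarrow> (nat \<Rightarrow> real) \<Rightarrow> real" where
  "qform n W v = (\<Sum>i<n. \<Sum>j<n. v i * W i j * v j)"

definition basis_fun :: "nat \<Rightarrow> nat \<Rightarrow> real" where
  "basis_fun k i = (if i = k then 1 else 0)"

lemma qform_add_smult:
  "qform n M (\<lambda>i. x i + t * w i) = qform n M x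
     + t * ((\<Sum>i<n. \<Sum>j<n. x i * M i j * w j) + (\<Sum>i<n. \<Sum>j<n. w i * M i j * x j)) + t\<^sup>2 * qform n M w"
  unfolding qform_def by (simp add: algebra_simps power2_eq_square sum.distrib sum_distrib_left)

lemma sum_squares_add_smult:
  fixes x w :: "nat \<Rightarrow> real"
  shows "(\<Sum>i<n. (x i + t * w i)\<^sup>2) = (\<Sum>i<n. (x i)\<^sup>2) + t * (2 * (\<Sum>i<n. x i * w i)) + t\<^sup>2 * (\<Sum>i<n. (w i)\<^sup>2)"
  by (simp add: algebra_simps power2_eq_square sum.distrib sum_distrib_left)

lemma sum_basis_fun_left:
  assumes "k < n"
  shows "(\<Sum>i<n. basis_fun k i * g i) = g k"
proof -
  have "(\<Sum>i<n. basis_fun k i * g i) = (\<Sum>i<n. if i = k then g i else 0)"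
    by (rule sum.cong) (simp_all add: basis_fun_def)
  with assms show ?thesis by simp
qed

lemma sum_basis_fun_right: "k < n \<Longrightarrow> (\<Sum>i<n. g i * basis_fun k i) = g k"
  using sum_basis_fun_left[of k n g] by (simp add: mult.commute)

lemma bilinear_basis_fun_left:
  assumes "k < n"
  shows "(\<Sum>i<n. \<Sum>j<n. basis_fun k i * W i j * f j) = (\<Sum>j<n. W k j * f j)"
proof -
  have "(\<Sum>i<n. \<Sum>j<n. basis_fun k i * W i j * f j) = (\<Sum>i<n. basis_fun k i * (\<Sum>j<n. W i j * f j))"
    by (simp add: sum_distrib_left mult.assoc)
  with assms show ?thesis by (simp add: sum_basis_fun_left)
qed

lemma bilinear_basis_fun_right:
  "k < n \<Longrightarrow> (\<Sum>i<n. \<Sum>j<n. f i * W i j * basis_fun k j) = (\<Sum>i<n. f i * W i k)"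
  by (simp add: sum_basis_fun_right)

lemma qform_basis_fun:
  assumes "k < n"
  shows "qform n W (basis_fun k) = W k k"
proof -
  have "qform n W (basis_fun k) = (\<Sum>j<n. W k j * basis_fun k j)"
    unfolding qform_def by (rule bilinear_basis_fun_left[OF assms])
  with assms show ?thesis by (simp add: sum_basis_fun_right)
qed

lemma sum_basis_fun_sq: "k < n \<Longrightarrow> (\<Sum>i<n. (basis_fun k i)\<^sup>2) = 1"
  using sum_basis_fun_left[of k n "basis_fun k"] by (simp add: power2_eq_square basis_fun_def)

definition unit_sphere_fun :: "nat \<Rightarrow> (nat \<Rightarrow> real) set" where
  "unit_sphere_fun n = {x \<in> {..<n} \<rightarrow>\<^sub>E UNIV. (\<Sum>i<n. (x i)\<^sup>2) = 1}"

lemma abs_le_one_of_sum_squares_eq_one: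
  fixes y :: "nat \<Rightarrow> real"
  assumes "(\<Sum>i<n. (y i)\<^sup>2) = 1" "i < n"
  shows "\<bar>y i\<bar> \<le> 1"
proof -
  have "(y i)\<^sup>2 \<le> (\<Sum>i<n. (y i)\<^sup>2)" by (rule member_le_sum) (use assms(2) in auto)
  thus ?thesis using assms(1) by (simp add: abs_square_le_1)
qed

lemma restrict_mem_unit_sphere_fun:
  "(\<Sum>i<n. (y i)\<^sup>2) = 1 \<Longrightarrow> restrict y {..<n} \<in> unit_sphere_fun n"
  unfolding unit_sphere_fun_def by simp

lemma compactin_unit_sphere_fun:
  "compactin (product_topology (\<lambda>_. euclideanreal) {..<n}) (unit_sphere_fun n)"
proof -
  let ?T = "product_topology (\<lambda>_. euclideanreal) {..<n}"
  have "closedin ?T {x \<in> topspace ?T. (\<Sum>i<n. (x i)\<^sup>2) \<in> {1}}"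
    by (rule closedin_continuous_map_preimage) (auto intro!: continuous_intros)
  moreover have "compactin ?T ({..<n} \<rightarrow>\<^sub>E {-1..1::real})" by (simp add: compactin_PiE)
  ultimately have "compactin ?T ({x \<in> topspace ?T. (\<Sum>i<n. (x i)\<^sup>2) \<in> {1}} \<inter> ({..<n} \<rightarrow>\<^sub>E {-1..1}))"
    by (rule closed_Int_compactin)
  moreover have "{x \<in> topspace ?T. (\<Sum>i<n. (x i)\<^sup>2) \<in> {1}} \<inter> ({..<n} \<rightarrow>\<^sub>E {-1..1}) = unit_sphere_fun n"
  proof (intro equalityI subsetI)
    fix x assume "x \<in> {x \<in> topspace ?T. (\<Sum>i<n. (x i)\<^sup>2) \<in> {1}} \<inter> ({..<n} \<rightarrow>\<^sub>E {-1..1})"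
    thus "x \<in> unit_sphere_fun n" by (simp add: unit_sphere_fun_def)
  next
    fix x assume x: "x \<in> unit_sphere_fun n"
    hence "x \<in> {..<n} \<rightarrow>\<^sub>E {-1..1}"
      using abs_le_one_of_sum_squares_eq_one[of x n] unfolding unit_sphere_fun_def PiE_iff
      by (simp add: abs_le_iff)
    thus "x \<in> {x \<in> topspace ?T. (\<Sum>i<n. (x i)\<^sup>2) \<in> {1}} \<inter> ({..<n} \<rightarrow>\<^sub>E {-1..1})"
      using x by (simp add: unit_sphere_fun_def)
  qed
  ultimately show ?thesis by simp
qed

lemma qform_attains_max_on_sphere:
  assumes n: "0 < n"
  shows "\<exists>x. (\<Sum>i<n. (x i)\<^sup>2) = 1 \<and> (\<forall>y. (\<Sum>i<n. (y i)\<^sup>2) = 1 \<longrightarrow> qform n M y \<le> qform n M x)"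
proof -
  have cq: "continuous_map (product_topology (\<lambda>_. euclideanreal) {..<n}) euclideanreal (qform n M)"
    unfolding qform_def by (intro continuous_intros) auto
  have cpt: "compact (qform n M ` unit_sphere_fun n)"
    using image_compactin[OF compactin_unit_sphere_fun cq] by simp
  have "(\<Sum>i<n. (basis_fun 0 i)\<^sup>2) = 1" using sum_basis_fun_sq[OF n] .
  hence "qform n M ` unit_sphere_fun n \<noteq> {}" using restrict_mem_unit_sphere_fun by blast
  then obtain x where x: "x \<in> unit_sphere_fun n" and max: "\<forall>z \<in> unit_sphere_fun n. qform n M z \<le> qform n M x"
    using compact_attains_sup[OF cpt] by auto
  show ?thesis
  proof (intro exI conjI allI impI)
    show "(\<Sum>i<n. (x i)\<^sup>2) = 1" using x unfolding unit_sphere_fun_def by simp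
    fix y :: "nat \<Rightarrow> real" assume "(\<Sum>i<n. (y i)\<^sup>2) = 1"
    hence "qform n M (restrict y {..<n}) \<le> qform n M x" using max restrict_mem_unit_sphere_fun by blast
    thus "qform n M y \<le> qform n M x" by (simp add: qform_def)
  qed
qed

lemma qform_le_sphere_max:
  assumes max: "\<forall>y. (\<Sum>i<n. (y i)\<^sup>2) = 1 \<longrightarrow> qform n M y \<le> qform n M x"
  shows "qform n M y \<le> qform n M x * (\<Sum>i<n. (y i)\<^sup>2)"
proof (cases "(\<Sum>i<n. (y i)\<^sup>2) = 0")
  case True
  hence "\<forall>i\<in>{..<n}. (y i)\<^sup>2 = 0" by (subst sum_nonneg_eq_0_iff[symmetric]) auto
  hence "qform n M y = 0" unfolding qform_def by simp
  thus ?thesis using True by simp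
next
  case False
  define s where "s = sqrt (\<Sum>i<n. (y i)\<^sup>2)"
  have pos: "0 < (\<Sum>i<n. (y i)\<^sup>2)" using False by (metis (no_types, lifting) order_le_less sum_nonneg zero_le_power2)
  hence sp: "0 < s" and ss: "s\<^sup>2 = (\<Sum>i<n. (y i)\<^sup>2)" unfolding s_def by simp_all
  have "(\<Sum>i<n. (y i / s)\<^sup>2) = (\<Sum>i<n. (y i)\<^sup>2) / s\<^sup>2" by (simp add: power_divide sum_divide_distrib)
  also have "\<dots> = 1" using ss pos by simp
  finally have "qform n M (\<lambda>i. y i / s) \<le> qform n M x" by (rule max[rule_format])
  moreover have "qform n M (\<lambda>i. y i / s) = qform n M y / s\<^sup>2"
    unfolding qform_def by (simp add: sum_divide_distrib power2_eq_square)
  ultimately show ?thesis using pos ss by (simp add: divide_le_eq mult.commute)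
qed

lemma qform_max_is_eigenvector:
  assumes sym: "\<forall>i<n. \<forall>j<n. M i j = M j i" and x1: "(\<Sum>i<n. (x i)\<^sup>2) = 1"
    and bound: "\<And>y. qform n M y \<le> qform n M x * (\<Sum>i<n. (y i)\<^sup>2)" and k: "k < n"
  shows "(\<Sum>j<n. M k j * x j) = qform n M x * x k"
proof -
  let ?lam = "qform n M x" and ?Mx = "\<Sum>j<n. M k j * x j"
  have Mx: "(\<Sum>i<n. x i * M i k) = ?Mx" using sym k by (auto intro!: sum.cong)
  have "(2 * ?Mx - 2 * ?lam * x k) * t + (M k k - ?lam) * t\<^sup>2 \<le> 0" for t
  proof -
    have "qform n M (\<lambda>i. x i + t * basis_fun k i) \<le> ?lam * (\<Sum>i<n. (x i + t * basis_fun k i)\<^sup>2)"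
      by (rule bound)
    thus ?thesis
      unfolding qform_add_smult sum_squares_add_smult bilinear_basis_fun_left[OF k]
        bilinear_basis_fun_right[OF k] qform_basis_fun[OF k] sum_basis_fun_right[OF k]
        sum_basis_fun_sq[OF k] Mx x1
      by (simp add: algebra_simps)
  qed
  hence "2 * ?Mx - 2 * ?lam * x k = 0" by (rule quadratic_nonpos_imp_linear_coeff_zero)
  thus ?thesis by simp
qed

lemma symmetric_qform_eigenpair:
  assumes sym: "\<forall>i<n. \<forall>j<n. M i j = M j i" and n: "0 < n"
  shows "\<exists>x lam. (\<Sum>i<n. (x i)\<^sup>2) = 1 \<and> (\<forall>i<n. (\<Sum>j<n. M i j * x j) = lam * x i)
     \<and> (\<forall>y. qform n M y \<le> lam * (\<Sum>i<n. (y i)\<^sup>2))"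
proof -
  obtain x where x1: "(\<Sum>i<n. (x i)\<^sup>2) = 1"
    and max: "\<forall>y. (\<Sum>i<n. (y i)\<^sup>2) = 1 \<longrightarrow> qform n M y \<le> qform n M x"
    using qform_attains_max_on_sphere[OF n] by blast
  have bound: "qform n M y \<le> qform n M x * (\<Sum>i<n. (y i)\<^sup>2)" for y
    by (rule qform_le_sphere_max[OF max])
  show ?thesis
    using x1 bound qform_max_is_eigenvector[OF sym x1 bound] by blast
qed

lemma qform_nonneg_zero_diag_imp_zero_row:
  assumes psd: "\<forall>v. 0 \<le> qform n W v" and sym: "\<forall>i<n. \<forall>j<n. W i j = W j i"
    and k: "k < n" and j: "j < n" and zero: "W k k = 0"
  shows "W k j = 0"
proof -
  have "0 \<le> W j j + (2 * W k j) * t" for t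
  proof -
    have "0 \<le> qform n W (\<lambda>i. basis_fun j i + t * basis_fun k i)" using psd by blast
    also have "\<dots> = W j j + (2 * W k j) * t"
      unfolding qform_add_smult qform_basis_fun[OF j] qform_basis_fun[OF k] bilinear_basis_fun_left[OF j]
        bilinear_basis_fun_right[OF j] zero
      using k j sym by (simp add: sum_basis_fun_right sum_basis_fun_left)
    finally show ?thesis .
  qed
  from affine_nonneg_imp_slope_zero[OF this] show ?thesis by simp
qed

lemma qform_schur_complement_nonneg:
  assumes psd: "\<forall>v. 0 \<le> qform n W v" and sym: "\<forall>i<n. \<forall>j<n. W i j = W j i"
    and k: "k < n" and p: "0 < W k k"
  shows "0 \<le> qform n (\<lambda>i j. W i j - W i k * W k j / W k k) v"
proof -
  define c where "c = (\<Sum>j<n. W k j * v j)"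
  have c': "(\<Sum>i<n. v i * W i k) = c" unfolding c_def
  proof (rule sum.cong[OF refl])
    fix i assume "i \<in> {..<n}"
    thus "v i * W i k = W k i * v i" using sym k by simp
  qed
  define s where "s = - c / W k k"
  have "0 \<le> qform n W (\<lambda>i. v i + s * basis_fun k i)" using psd by blast
  also have "\<dots> = qform n W v + s * (c + c) + s\<^sup>2 * W k k"
    unfolding qform_add_smult bilinear_basis_fun_left[OF k] bilinear_basis_fun_right[OF k]
      qform_basis_fun[OF k] c' c_def[symmetric] by simp
  also have "\<dots> = qform n W v - c\<^sup>2 / W k k" unfolding s_def using p by (simp add: power2_eq_square field_simps)
  also have "\<dots> = qform n (\<lambda>i j. W i j - W i k * W k j / W k k) v"
  proof -
    have "(\<Sum>i<n. \<Sum>j<n. v i * (W i k * W k j / W k k) * v j)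
        = (\<Sum>i<n. (v i * W i k) * (\<Sum>j<n. W k j * v j) / W k k)"
      by (rule sum.cong[OF refl]) (simp add: sum_distrib_left sum_divide_distrib algebra_simps)
    also have "\<dots> = (\<Sum>i<n. v i * W i k) * c / W k k"
      unfolding c_def[symmetric] by (simp add: sum_distrib_right sum_divide_distrib)
    also have "\<dots> = c\<^sup>2 / W k k" unfolding c' by (simp add: power2_eq_square)
    finally show ?thesis unfolding qform_def by (simp add: algebra_simps sum_subtractf)
  qed
  finally show ?thesis .
qed

lemma schur_complement_vanishes_below:
  fixes W :: "nat \<Rightarrow> nat \<Rightarrow> real"
  assumes sym: "\<forall>i<n. \<forall>j<n. W i j = W j i" and k: "k < n" and p: "0 < W k k"
    and zero: "\<forall>i<n. \<forall>j<n. (i < k \<or> j < k) \<longrightarrow> W i j = 0"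
  shows "\<forall>i<n. \<forall>j<n. (i < Suc k \<or> j < Suc k) \<longrightarrow> W i j - W i k * W k j / W k k = 0"
proof (intro allI impI)
  fix i j assume ij: "i < n" "j < n" "i < Suc k \<or> j < Suc k"
  have "W i k = W k i" using sym ij k by blast
  moreover have "i < k \<Longrightarrow> W i j = 0 \<and> W i k = 0" "j < k \<Longrightarrow> W i j = 0 \<and> W k j = 0"
    using zero[rule_format, of i j] zero[rule_format, of i k] zero[rule_format, of k j] ij k by auto
  moreover have "i = k \<or> j = k \<or> i < k \<or> j < k" using ij(3) by linarith
  ultimately show "W i j - W i k * W k j / W k k = 0" using p by auto
qed

lemma sum_of_squares_add_pivot:
  fixes W c :: "nat \<Rightarrow> nat \<Rightarrow> real"
  assumes sym: "\<forall>i<n. \<forall>j<n. W i j = W j i" and k: "k < n" and p: "0 < W k k"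
    and c: "\<forall>i<n. \<forall>j<n. W i j - W i k * W k j / W k k = (\<Sum>l<L. c l i * c l j)"
  shows "\<exists>(L'::nat) c'. \<forall>i<n. \<forall>j<n. W i j = (\<Sum>l<L'. c' l i * c' l j)"
proof -
  define c' where "c' = c(L := (\<lambda>i. W i k / sqrt (W k k)))"
  have "W i j = (\<Sum>l<Suc L. c' l i * c' l j)" if ij: "i < n" "j < n" for i j
  proof -
    have "(\<Sum>l<Suc L. c' l i * c' l j) = (\<Sum>l<L. c l i * c l j) + W i k / sqrt (W k k) * (W j k / sqrt (W k k))"
      unfolding c'_def by simp
    also have "\<dots> = (W i j - W i k * W k j / W k k) + W i k * W j k / (sqrt (W k k) * sqrt (W k k))"
      using c ij by simp
    also have "\<dots> = W i j" using sym ij k p by simp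
    finally show ?thesis by simp
  qed
  thus ?thesis by (intro exI[of _ "Suc L"] exI[of _ c']) blast
qed

text \<open>Symmetric Gaussian elimination, one pivot at a time.\<close>

lemma qform_nonneg_sum_of_squares_from:
  assumes "\<forall>i<n. \<forall>j<n. W i j = W j i" "\<forall>v. 0 \<le> qform n W v"
    and "\<forall>i<n. \<forall>j<n. (i < k \<or> j < k) \<longrightarrow> W i j = 0"
  shows "\<exists>(L::nat) c. \<forall>i<n. \<forall>j<n. W i j = (\<Sum>l<L. c l i * c l j)"
  using assms
proof (induction "n - k" arbitrary: k W)
  case 0
  have "W i j = 0" if "i < n" "j < n" for i j
  proof -
    have "i < k" using that(1) "0.hyps" by simp
    thus ?thesis using "0.prems"(3) that by blast
  qed
  thus ?case by (intro exI[of _ "0::nat"]) simp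
next
  case (Suc d)
  note sym = Suc.prems(1) and psd = Suc.prems(2) and zero = Suc.prems(3)
  have k: "k < n" and d: "d = n - Suc k" using Suc.hyps(2) by auto
  show ?case
  proof (cases "W k k = 0")
    case True
    have row: "W k j = 0" if "j < n" for j
      by (rule qform_nonneg_zero_diag_imp_zero_row[OF psd sym k that True])
    have "W i j = 0" if ij: "i < n" "j < n" "i < Suc k \<or> j < Suc k" for i j
    proof -
      have "W i k = W k i" and "i = k \<or> j = k \<or> i < k \<or> j < k" using sym ij k by auto
      thus ?thesis using row[OF ij(1)] row[OF ij(2)] zero[rule_format, of i j] ij by auto
    qed
    thus ?thesis using Suc.hyps(1)[OF d sym psd] by blast
  next
    case False
    have "0 \<le> W k k" using spec[OF psd, of "basis_fun k"] qform_basis_fun[OF k, of W] by simp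
    hence p: "0 < W k k" using False by simp
    define W' where "W' = (\<lambda>i j. W i j - W i k * W k j / W k k)"
    have sym': "\<forall>i<n. \<forall>j<n. W' i j = W' j i"
    proof (intro allI impI)
      fix i j assume "i < n" "j < n"
      hence "W i j = W j i" "W i k = W k i" "W j k = W k j" using sym k by blast+
      thus "W' i j = W' j i" unfolding W'_def by (simp add: mult.commute)
    qed
    have psd': "\<forall>v. 0 \<le> qform n W' v"
      unfolding W'_def using qform_schur_complement_nonneg[OF psd sym k p] by (rule allI)
    obtain L :: nat and c where "\<forall>i<n. \<forall>j<n. W' i j = (\<Sum>l<L. c l i * c l j)"
      using Suc.hyps(1)[OF d sym' psd'] schur_complement_vanishes_below[OF sym k p zero]
      unfolding W'_def by blast
    thus ?thesis unfolding W'_def by (rule sum_of_squares_add_pivot[OF sym k p])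
  qed
qed

lemma qform_nonneg_sum_of_squares:
  assumes "\<forall>i<n. \<forall>j<n. W i j = W j i" "\<forall>v. 0 \<le> qform n W v"
  shows "\<exists>(L::nat) c. \<forall>i<n. \<forall>j<n. W i j = (\<Sum>l<L. c l i * c l j)"
  using qform_nonneg_sum_of_squares_from[of n W 0] assms by simp

section \<open>Trace inner product, PSD matrices and the largest eigenvalue\<close>

definition mat_fun :: "real mat \<Rightarrow> nat \<Rightarrow> nat \<Rightarrow> real" where
  "mat_fun M = (\<lambda>i j. M $$ (i, j))"

lemma row_scalar_prod_eq_sum:
  "A \<in> carrier_mat a b \<Longrightarrow> i < a \<Longrightarrow> v \<in> carrier_vec b \<Longrightarrow> row A i \<bullet> v = (\<Sum>j<b. A $$ (i, j) * v $ j)"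
  unfolding scalar_prod_def by (auto simp: atLeast0LessThan intro!: sum.cong)

lemma frob_eq_sum:
  assumes "A \<in> carrier_mat a b" "B \<in> carrier_mat b a"
  shows "frob A B = (\<Sum>i<a. \<Sum>j<b. A $$ (i, j) * B $$ (j, i))"
  unfolding frob_def mtrace_def using assms
  by (auto simp: scalar_prod_def atLeast0LessThan intro!: sum.cong)

lemma mtrace_eq_sum: "A \<in> carrier_mat n n \<Longrightarrow> mtrace A = (\<Sum>i<n. A $$ (i, i))"
  unfolding mtrace_def by simp

lemma frob_comm:
  assumes "A \<in> carrier_mat a b" "B \<in> carrier_mat b a"
  shows "frob A B = frob B A"
  unfolding frob_eq_sum[OF assms] frob_eq_sum[OF assms(2,1)]
  by (subst sum.swap) (simp add: mult.commute)

lemma frob_add_left: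
  "A \<in> carrier_mat n n \<Longrightarrow> B \<in> carrier_mat n n \<Longrightarrow> Y \<in> carrier_mat n n \<Longrightarrow>
    frob (A + B) Y = frob A Y + frob B Y"
  by (simp add: frob_eq_sum[of _ n n] algebra_simps sum.distrib)

lemma frob_minus_left:
  "A \<in> carrier_mat n n \<Longrightarrow> B \<in> carrier_mat n n \<Longrightarrow> Y \<in> carrier_mat n n \<Longrightarrow>
    frob (A - B) Y = frob A Y - frob B Y"
  by (subst frob_eq_sum[of "A - B" n n]) (auto simp: frob_eq_sum[of _ n n] algebra_simps sum_subtractf)

lemma frob_smult_left:
  "A \<in> carrier_mat n n \<Longrightarrow> Y \<in> carrier_mat n n \<Longrightarrow> frob (c \<cdot>\<^sub>m A) Y = c * frob A Y"
  by (simp add: frob_eq_sum[of _ n n] algebra_simps sum_distrib_left)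

lemma frob_add_right:
  "A \<in> carrier_mat n n \<Longrightarrow> Y \<in> carrier_mat n n \<Longrightarrow> Z \<in> carrier_mat n n \<Longrightarrow>
    frob A (Y + Z) = frob A Y + frob A Z"
  by (simp add: frob_eq_sum[of _ n n] algebra_simps sum.distrib)

lemma frob_minus_right:
  "A \<in> carrier_mat n n \<Longrightarrow> Y \<in> carrier_mat n n \<Longrightarrow> Z \<in> carrier_mat n n \<Longrightarrow>
    frob A (Y - Z) = frob A Y - frob A Z"
  by (subst frob_eq_sum[of A n n "Y - Z"]) (auto simp: frob_eq_sum[of _ n n] algebra_simps sum_subtractf)

lemma frob_smult_right:
  "A \<in> carrier_mat n n \<Longrightarrow> Y \<in> carrier_mat n n \<Longrightarrow> frob A (c \<cdot>\<^sub>m Y) = c * frob A Y"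
  by (simp add: frob_eq_sum[of _ n n] algebra_simps sum_distrib_left)

lemma frob_uminus_right:
  "A \<in> carrier_mat n n \<Longrightarrow> Y \<in> carrier_mat n n \<Longrightarrow> frob A (- Y) = - frob A Y"
  by (simp add: frob_eq_sum[of _ n n] sum_negf)

lemma frob_zero_left: "Y \<in> carrier_mat n n \<Longrightarrow> frob (0\<^sub>m n n) Y = 0"
  by (simp add: frob_eq_sum[of _ n n])

lemma mtrace_add:
  "A \<in> carrier_mat n n \<Longrightarrow> B \<in> carrier_mat n n \<Longrightarrow> mtrace (A + B) = mtrace A + mtrace B"
  unfolding mtrace_def by (simp add: sum.distrib)

lemma mtrace_smult: "A \<in> carrier_mat n n \<Longrightarrow> mtrace (c \<cdot>\<^sub>m A) = c * mtrace A"
  unfolding mtrace_def by (simp add: sum_distrib_left)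

lemma mtrace_congruence_orthonormal:
  assumes B: "B \<in> carrier_mat n k" and BB: "transpose_mat B * B = 1\<^sub>m k" and S: "S \<in> carrier_mat k k"
  shows "mtrace (B * S * transpose_mat B) = mtrace S"
proof -
  have "mtrace (B * S * transpose_mat B) = frob (B * S) (transpose_mat B)" unfolding frob_def ..
  also have "\<dots> = frob (transpose_mat B) (B * S)" using B S by (intro frob_comm) auto
  also have "\<dots> = mtrace ((transpose_mat B * B) * S)" unfolding frob_def using B S by simp
  finally show ?thesis using BB S by simp
qed

lemma scalar_prod_mult_vec_eq_qform:
  assumes M: "M \<in> carrier_mat n n" and v: "v \<in> carrier_vec n"
  shows "v \<bullet> (M *\<^sub>v v) = qform n (mat_fun M) (\<lambda>i. v $ i)"
proof -
  have "v \<bullet> (M *\<^sub>v v) = (\<Sum>i<n. v $ i * (\<Sum>j<n. M $$ (i, j) * v $ j))"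
    unfolding scalar_prod_def using M v by (auto simp: atLeast0LessThan row_scalar_prod_eq_sum intro!: sum.cong)
  thus ?thesis unfolding qform_def mat_fun_def by (simp add: sum_distrib_left mult.assoc)
qed

lemma symm_carrier: "symm n X \<Longrightarrow> X \<in> carrier_mat n n"
  unfolding symm_def by auto

lemma symm_add: "symm n A \<Longrightarrow> symm n B \<Longrightarrow> symm n (A + B)"
  unfolding symm_def by (auto simp: transpose_add)

lemma symm_minus: "symm n A \<Longrightarrow> symm n B \<Longrightarrow> symm n (A - B)"
  unfolding symm_def by (auto simp: transpose_minus)

lemma symm_uminus: "symm n X \<Longrightarrow> symm n (- X)"
  unfolding symm_def by (auto simp: transpose_uminus)

lemma symm_smult:
  assumes "symm n A"
  shows "symm n (c \<cdot>\<^sub>m A)"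
proof -
  have "transpose_mat (c \<cdot>\<^sub>m A) = c \<cdot>\<^sub>m transpose_mat A" by (rule eq_matI) auto
  thus ?thesis using assms unfolding symm_def by auto
qed

lemma symm_mat_fun: "symm n M \<Longrightarrow> \<forall>i<n. \<forall>j<n. mat_fun M i j = mat_fun M j i"
  unfolding symm_def mat_fun_def by (metis index_transpose_mat(1) carrier_matD)

lemma symm_Astar:
  assumes "\<forall>i<m. symm n (A i)"
  shows "symm n (Astar n m A y)"
proof -
  have "A k $$ (i, j) = A k $$ (j, i)" if "k < m" "i < n" "j < n" for k i j
    using assms that unfolding symm_def by (metis carrier_matD index_transpose_mat(1))
  thus ?thesis unfolding symm_def Astar_def by (intro conjI eq_matI) (auto intro!: sum.cong)
qed

lemma symm_scalar_prod_mult_vec: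
  assumes M: "symm n M" and v: "v \<in> carrier_vec n" and w: "w \<in> carrier_vec n"
  shows "(M *\<^sub>v v) \<bullet> w = v \<bullet> (M *\<^sub>v w)"
  using transpose_vec_mult_scalar[OF symm_carrier[OF M] w v] M unfolding symm_def by simp

lemma psd_symm: "psd n W \<Longrightarrow> symm n W"
  unfolding psd_def by auto

lemma psd_carrier: "psd n A \<Longrightarrow> A \<in> carrier_mat n n"
  unfolding psd_def symm_def by auto

lemma psd_qform_nonneg:
  assumes "psd n W"
  shows "0 \<le> qform n (mat_fun W) x"
proof -
  have "0 \<le> vec n x \<bullet> (W *\<^sub>v vec n x)" using assms unfolding psd_def by auto
  also have "\<dots> = qform n (mat_fun W) x"
    using scalar_prod_mult_vec_eq_qform[OF psd_carrier[OF assms]] by (simp add: qform_def)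
  finally show ?thesis .
qed

lemma psd_add:
  assumes A: "psd n A" and B: "psd n B"
  shows "psd n (A + B)"
proof -
  have Ac: "A \<in> carrier_mat n n" and Bc: "B \<in> carrier_mat n n" using A B psd_carrier by auto
  have "0 \<le> v \<bullet> ((A + B) *\<^sub>v v)" if v: "v \<in> carrier_vec n" for v
  proof -
    have "v \<bullet> ((A + B) *\<^sub>v v) = v \<bullet> (A *\<^sub>v v) + v \<bullet> (B *\<^sub>v v)"
      using Ac Bc v by (simp add: add_mult_distrib_mat_vec scalar_prod_add_distrib[of _ n])
    thus ?thesis using A B v unfolding psd_def by auto
  qed
  thus ?thesis using A B symm_add unfolding psd_def by blast
qed

lemma psd_smult:
  assumes A: "psd n A" and c: "0 \<le> c"
  shows "psd n (c \<cdot>\<^sub>m A)"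
proof -
  have Ac: "A \<in> carrier_mat n n" using A psd_carrier by auto
  have "0 \<le> v \<bullet> ((c \<cdot>\<^sub>m A) *\<^sub>v v)" if v: "v \<in> carrier_vec n" for v
  proof -
    have "(c \<cdot>\<^sub>m A) *\<^sub>v v = c \<cdot>\<^sub>v (A *\<^sub>v v)"
      using Ac v by (intro eq_vecI) (auto simp: scalar_prod_def sum_distrib_left mult.assoc)
    hence "v \<bullet> ((c \<cdot>\<^sub>m A) *\<^sub>v v) = c * (v \<bullet> (A *\<^sub>v v))" using Ac v by simp
    thus ?thesis using A v c unfolding psd_def by auto
  qed
  thus ?thesis using A symm_smult unfolding psd_def by blast
qed

lemma psd_congruence:
  assumes S: "psd k S" and B: "B \<in> carrier_mat n k"
  shows "psd n (B * S * transpose_mat B)"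
proof -
  have Sc: "S \<in> carrier_mat k k" and St: "transpose_mat S = S" using S unfolding psd_def symm_def by auto
  have "transpose_mat (B * S * transpose_mat B) = transpose_mat (transpose_mat B) * transpose_mat (B * S)"
    using B Sc by (intro transpose_mult) auto
  also have "\<dots> = B * (transpose_mat S * transpose_mat B)" using B Sc by (simp add: transpose_mult)
  also have "\<dots> = B * S * transpose_mat B" using B Sc St by simp
  finally have t: "transpose_mat (B * S * transpose_mat B) = B * S * transpose_mat B" .
  have "0 \<le> v \<bullet> ((B * S * transpose_mat B) *\<^sub>v v)" if v: "v \<in> carrier_vec n" for v
  proof -
    define w where "w = transpose_mat B *\<^sub>v v"
    have w: "w \<in> carrier_vec k" unfolding w_def using B v by auto
    have "(B * S * transpose_mat B) *\<^sub>v v = (B * S) *\<^sub>v w"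
      unfolding w_def using B Sc v by (intro assoc_mult_mat_vec) auto
    also have "\<dots> = B *\<^sub>v (S *\<^sub>v w)" using B Sc w by (rule assoc_mult_mat_vec)
    moreover have "v \<bullet> (B *\<^sub>v (S *\<^sub>v w)) = w \<bullet> (S *\<^sub>v w)"
      unfolding w_def using transpose_vec_mult_scalar[OF B _ v, of "S *\<^sub>v w"] Sc w by (simp add: w_def)
    ultimately show ?thesis using S w unfolding psd_def by auto
  qed
  thus ?thesis unfolding psd_def symm_def using B Sc t by auto
qed

lemma mtrace_psd_nonneg:
  assumes "psd n W"
  shows "0 \<le> mtrace W"
proof -
  have "0 \<le> W $$ (i, i)" if "i < n" for i
    using psd_qform_nonneg[OF assms, of "basis_fun i"] qform_basis_fun[OF that] by (simp add: mat_fun_def)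
  thus ?thesis unfolding mtrace_eq_sum[OF psd_carrier[OF assms]] by (intro sum_nonneg) auto
qed

lemma finite_eigenvalues:
  fixes M :: "real mat"
  assumes "M \<in> carrier_mat n n"
  shows "finite {k. eigenvalue M k}"
proof -
  have "char_poly M \<noteq> 0" using degree_monic_char_poly[OF assms] by auto
  hence "finite {k. poly (char_poly M) k = 0}" using poly_roots_finite[of "char_poly M"] by simp
  thus ?thesis using eigenvalue_root_char_poly[OF assms] by simp
qed

text \<open>The Rayleigh maximizer is an eigenvector, so \<open>lmax\<close> (the largest root of the characteristic
  polynomial) bounds the Rayleigh quotient.\<close>

lemma lmax_eigenvalue_and_qform_bound:
  assumes sM: "symm n M" and n: "0 < n"
  shows "eigenvalue M (lmax M)" "qform n (mat_fun M) x \<le> lmax M * (\<Sum>i<n. (x i)\<^sup>2)"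
proof -
  have M: "M \<in> carrier_mat n n" using symm_carrier[OF sM] .
  obtain y lam where y1: "(\<Sum>i<n. (y i)\<^sup>2) = 1"
    and ye: "\<forall>i<n. (\<Sum>j<n. mat_fun M i j * y j) = lam * y i"
    and bound: "\<forall>x. qform n (mat_fun M) x \<le> lam * (\<Sum>i<n. (x i)\<^sup>2)"
    using symmetric_qform_eigenpair[OF symm_mat_fun[OF sM] n] by blast
  have ev: "eigenvalue M lam"
  proof -
    have "M *\<^sub>v vec n y = lam \<cdot>\<^sub>v vec n y"
      using M ye by (intro eq_vecI) (auto simp: row_scalar_prod_eq_sum mat_fun_def)
    moreover have "vec n y \<noteq> 0\<^sub>v n"
    proof
      assume "vec n y = 0\<^sub>v n"
      hence "\<forall>i<n. y i = 0" by (metis index_vec index_zero_vec(1))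
      thus False using y1 by simp
    qed
    ultimately show ?thesis unfolding eigenvalue_def eigenvector_def using M
      by (intro exI[of _ "vec n y"]) auto
  qed
  have fin: "finite {k. eigenvalue M k}" by (rule finite_eigenvalues[OF M])
  have "lmax M \<in> {k. eigenvalue M k}" unfolding lmax_def using fin ev by (intro Max_in) auto
  thus "eigenvalue M (lmax M)" by simp
  have le: "lam \<le> lmax M" unfolding lmax_def using fin ev by (intro Max_ge) auto
  have "qform n (mat_fun M) x \<le> lam * (\<Sum>i<n. (x i)\<^sup>2)" using bound by blast
  also have "\<dots> \<le> lmax M * (\<Sum>i<n. (x i)\<^sup>2)" using le by (intro mult_right_mono) (auto intro: sum_nonneg)
  finally show "qform n (mat_fun M) x \<le> lmax M * (\<Sum>i<n. (x i)\<^sup>2)" .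
qed

text \<open>Writing \<open>W\<close> as a sum of rank-one terms \<open>c\<^sub>l c\<^sub>l\<^sup>T\<close> reduces \<open>\<langle>W, M\<rangle>\<close> to a sum of values of the
  quadratic form of \<open>M\<close>, each at most \<open>lmax M |c\<^sub>l|\<^sup>2\<close>.\<close>

lemma frob_psd_le_mtrace_lmax:
  assumes W: "psd n W" and sM: "symm n M" and n: "0 < n"
  shows "frob W M \<le> mtrace W * lmax M"
proof -
  have Wc: "W \<in> carrier_mat n n" and Mc: "M \<in> carrier_mat n n"
    using psd_carrier[OF W] symm_carrier[OF sM] .
  obtain L :: nat and c where c: "\<forall>i<n. \<forall>j<n. mat_fun W i j = (\<Sum>l<L. c l i * c l j)"
    using qform_nonneg_sum_of_squares[OF symm_mat_fun[OF psd_symm[OF W]]] psd_qform_nonneg[OF W] by blast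
  have symM: "\<forall>i<n. \<forall>j<n. mat_fun M i j = mat_fun M j i" by (rule symm_mat_fun[OF sM])
  have "frob W M = (\<Sum>i<n. \<Sum>j<n. mat_fun W i j * mat_fun M j i)"
    unfolding frob_eq_sum[OF Wc Mc] mat_fun_def ..
  also have "\<dots> = (\<Sum>i<n. \<Sum>j<n. \<Sum>l<L. c l i * mat_fun M i j * c l j)"
    using c symM by (auto intro!: sum.cong simp: sum_distrib_right sum_distrib_left mult.commute mult.left_commute)
  also have "\<dots> = (\<Sum>l<L. qform n (mat_fun M) (c l))"
    unfolding qform_def by (subst sum.swap, subst (2) sum.swap) (simp add: sum.swap[of _ "{..<n}" "{..<L}"])
  also have "\<dots> \<le> (\<Sum>l<L. lmax M * (\<Sum>i<n. (c l i)\<^sup>2))"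
    by (intro sum_mono lmax_eigenvalue_and_qform_bound(2)[OF sM n])
  also have "\<dots> = lmax M * (\<Sum>i<n. \<Sum>l<L. c l i * c l i)"
    by (simp add: sum_distrib_left power2_eq_square) (rule sum.swap)
  also have "(\<Sum>i<n. \<Sum>l<L. c l i * c l i) = mtrace W"
    unfolding mtrace_eq_sum[OF Wc] using c by (auto intro!: sum.cong simp: mat_fun_def)
  finally show ?thesis by (simp add: mult.commute)
qed

lemma outer_carrier [simp]: "v \<in> carrier_vec n \<Longrightarrow> outer v \<in> carrier_mat n n"
  unfolding outer_def by auto

lemma frob_outer:
  assumes v: "v \<in> carrier_vec n" and M: "M \<in> carrier_mat n n"
  shows "frob (outer v) M = v \<bullet> (M *\<^sub>v v)"
proof -
  have "frob (outer v) M = (\<Sum>i<n. \<Sum>j<n. v $ i * v $ j * M $$ (j, i))"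
    unfolding frob_eq_sum[OF outer_carrier[OF v] M] using v by (auto simp: outer_def intro!: sum.cong)
  also have "\<dots> = qform n (mat_fun M) (\<lambda>i. v $ i)" unfolding qform_def mat_fun_def
    by (subst sum.swap) (simp add: mult.commute mult.left_commute)
  finally show ?thesis using scalar_prod_mult_vec_eq_qform[OF M v] by simp
qed

lemma outer_mult_vec:
  assumes u: "u \<in> carrier_vec k" and x: "x \<in> carrier_vec k"
  shows "outer u *\<^sub>v x = (u \<bullet> x) \<cdot>\<^sub>v u"
proof (rule eq_vecI)
  fix i assume "i < dim_vec ((u \<bullet> x) \<cdot>\<^sub>v u)"
  hence i: "i < k" using u by simp
  have "row (outer u) i = u $ i \<cdot>\<^sub>v u" using u i unfolding outer_def by (intro eq_vecI) auto
  thus "(outer u *\<^sub>v x) $ i = ((u \<bullet> x) \<cdot>\<^sub>v u) $ i" using u x i unfolding outer_def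
    by (simp add: mult.commute)
qed (use u in \<open>auto simp: outer_def\<close>)

lemma psd_outer:
  assumes u: "u \<in> carrier_vec k"
  shows "psd k (outer u)"
proof -
  have t: "transpose_mat (outer u) = outer u" unfolding outer_def by (rule eq_matI) auto
  have "0 \<le> x \<bullet> (outer u *\<^sub>v x)" if x: "x \<in> carrier_vec k" for x
  proof -
    have "x \<bullet> (outer u *\<^sub>v x) = (u \<bullet> x) * (x \<bullet> u)" using outer_mult_vec[OF u x] u x by simp
    also have "\<dots> = (u \<bullet> x)\<^sup>2" using comm_scalar_prod[OF x u] by (simp add: power2_eq_square)
    finally show ?thesis by simp
  qed
  thus ?thesis unfolding psd_def symm_def using u t by auto
qed

lemma mtrace_outer: "u \<in> carrier_vec k \<Longrightarrow> mtrace (outer u) = u \<bullet> u"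
  unfolding mtrace_def outer_def scalar_prod_def by (auto simp: atLeast0LessThan)

lemma congruence_outer:
  assumes B: "B \<in> carrier_mat n k" and u: "u \<in> carrier_vec k"
  shows "B * outer u * transpose_mat B = outer (B *\<^sub>v u)"
proof (rule eq_matI)
  fix i j assume "i < dim_row (outer (B *\<^sub>v u))" "j < dim_col (outer (B *\<^sub>v u))"
  hence ij: "i < n" "j < n" using B by (auto simp: outer_def)
  have rj: "row B j \<in> carrier_vec k" using B ij by simp
  have "row (B * outer u) i = (B *\<^sub>v u) $ i \<cdot>\<^sub>v u"
  proof (rule eq_vecI)
    fix l assume "l < dim_vec ((B *\<^sub>v u) $ i \<cdot>\<^sub>v u)"
    hence l: "l < k" using u by simp
    have "col (outer u) l = u $ l \<cdot>\<^sub>v u" using u l unfolding outer_def by (intro eq_vecI) auto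
    thus "row (B * outer u) i $ l = ((B *\<^sub>v u) $ i \<cdot>\<^sub>v u) $ l"
      using B u ij l by (simp add: outer_def mult.commute)
  qed (use B u in \<open>auto simp: outer_def\<close>)
  hence "(B * outer u * transpose_mat B) $$ (i, j) = (B *\<^sub>v u) $ i * (u \<bullet> row B j)"
    using B u ij rj by (simp add: outer_def)
  also have "u \<bullet> row B j = (B *\<^sub>v u) $ j" using comm_scalar_prod[OF u rj] B ij by simp
  finally show "(B * outer u * transpose_mat B) $$ (i, j) = outer (B *\<^sub>v u) $$ (i, j)"
    using B ij by (simp add: outer_def)
qed (use B u in \<open>auto simp: outer_def\<close>)

text \<open>An eigenvector for \<open>lmax M\<close> is orthogonal to every eigenvector for a different eigenvalue,
  so if it were orthogonal to all columns of the orthogonal matrix \<open>U\<close> it would vanish.\<close>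

lemma lmax_le_top_eigenvalue:
  assumes M: "symm n M" and n: "0 < n" and U: "U \<in> carrier_mat n n" "transpose_mat U * U = 1\<^sub>m n"
    and eig: "\<forall>j<n. M *\<^sub>v col U j = \<mu> j \<cdot>\<^sub>v col U j"
    and ord: "\<forall>i j. i \<le> j \<longrightarrow> j < n \<longrightarrow> \<mu> j \<le> \<mu> i"
  shows "lmax M \<le> \<mu> 0"
proof (rule ccontr)
  assume gt: "\<not> lmax M \<le> \<mu> 0"
  obtain w where w: "w \<in> carrier_vec n" "w \<noteq> 0\<^sub>v n" "M *\<^sub>v w = lmax M \<cdot>\<^sub>v w"
    using lmax_eigenvalue_and_qform_bound(1)[OF M n] symm_carrier[OF M]
    unfolding eigenvalue_def eigenvector_def by auto
  have orth: "col U j \<bullet> w = 0" if j: "j < n" for j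
  proof -
    have cu: "col U j \<in> carrier_vec n" using U j by simp
    have ne: "\<mu> j \<noteq> lmax M" using ord j gt by fastforce
    have "\<mu> j * (col U j \<bullet> w) = (M *\<^sub>v col U j) \<bullet> w" using eig j cu w by simp
    also have "\<dots> = col U j \<bullet> (M *\<^sub>v w)" by (rule symm_scalar_prod_mult_vec[OF M cu w(1)])
    also have "\<dots> = lmax M * (col U j \<bullet> w)" using w cu by simp
    finally show ?thesis using ne by simp
  qed
  have Utw: "transpose_mat U *\<^sub>v w = 0\<^sub>v n" using U orth by (intro eq_vecI) auto
  have "U * transpose_mat U = 1\<^sub>m n"
    using mat_mult_left_right_inverse[of "transpose_mat U" n U] U by auto
  hence "w = (U * transpose_mat U) *\<^sub>v w" using w by simp
  also have "\<dots> = U *\<^sub>v (transpose_mat U *\<^sub>v w)" using U w by (intro assoc_mult_mat_vec) auto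
  also have "\<dots> = 0\<^sub>v n" unfolding Utw using U by (intro eq_vecI) (auto simp: scalar_prod_def)
  finally show False using w(2) by simp
qed

section \<open>Column spaces and orthonormal blocks\<close>

lemma mult_vec_unit_vec:
  fixes M :: "real mat"
  assumes "M \<in> carrier_mat a b" "j < b"
  shows "M *\<^sub>v unit_vec b j = col M j"
  using assms unfolding carrier_mat_def by (intro eq_vecI) auto

lemma col_in_colspace:
  fixes M :: "real mat"
  assumes "M \<in> carrier_mat a b" "j < b"
  shows "col M j \<in> colspace M"
  unfolding colspace_def using mult_vec_unit_vec[OF assms] assms
  by (intro CollectI exI[of _ "unit_vec b j"]) auto

lemma orthonormal_colspace_proj:
  fixes P :: "real mat"
  assumes P: "P \<in> carrier_mat n k" and PP: "transpose_mat P * P = 1\<^sub>m k" and x: "x \<in> colspace P"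
  shows "P *\<^sub>v (transpose_mat P *\<^sub>v x) = x"
proof -
  obtain z where z: "z \<in> carrier_vec k" and xz: "x = P *\<^sub>v z" using x P unfolding colspace_def by auto
  have "transpose_mat P *\<^sub>v (P *\<^sub>v z) = (transpose_mat P * P) *\<^sub>v z" using P z by simp
  also have "\<dots> = z" unfolding PP using z by simp
  finally show ?thesis unfolding xz by simp
qed

lemma hcat_carrier: "A \<in> carrier_mat r a \<Longrightarrow> B \<in> carrier_mat r b \<Longrightarrow> hcat A B \<in> carrier_mat r (a + b)"
  unfolding hcat_def by auto

lemma col_hcat_left:
  assumes "A \<in> carrier_mat r a" "B \<in> carrier_mat r b" "j < a"
  shows "col (hcat A B) j = col A j"
  using assms unfolding hcat_def by (intro eq_vecI) auto

lemma col_hcat_right: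
  assumes "A \<in> carrier_mat r a" "B \<in> carrier_mat r b" "j < b"
  shows "col (hcat A B) (a + j) = col B j"
  using assms unfolding hcat_def by (intro eq_vecI) auto

lemma colspace_hcat_left:
  assumes "A \<in> carrier_mat r a" "B \<in> carrier_mat r b" "j < a"
  shows "col A j \<in> colspace (hcat A B)"
  using col_in_colspace[OF hcat_carrier[OF assms(1,2)], of j] col_hcat_left[OF assms] assms(3) by simp

lemma colspace_hcat_right:
  assumes "A \<in> carrier_mat r a" "B \<in> carrier_mat r b" "j < b"
  shows "col B j \<in> colspace (hcat A B)"
  using col_in_colspace[OF hcat_carrier[OF assms(1,2)], of "a + j"] col_hcat_right[OF assms] assms(3) by simp

lemma gram_mult_orthonormal_left:
  fixes P Q :: "real mat"
  assumes P: "P \<in> carrier_mat n r" and PP: "transpose_mat P * P = 1\<^sub>m r" and Q: "Q \<in> carrier_mat r q"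
  shows "transpose_mat (P * Q) * (P * Q) = transpose_mat Q * Q"
proof -
  have Pt: "transpose_mat P \<in> carrier_mat r n" and Qt: "transpose_mat Q \<in> carrier_mat q r" using P Q by auto
  have "transpose_mat (P * Q) * (P * Q) = (transpose_mat Q * transpose_mat P) * (P * Q)"
    by (simp add: transpose_mult[OF P Q])
  also have "\<dots> = transpose_mat Q * (transpose_mat P * (P * Q))"
    by (rule assoc_mult_mat[OF Qt Pt, of _ q]) (use P Q in simp)
  also have "transpose_mat P * (P * Q) = (transpose_mat P * P) * Q" by (rule assoc_mult_mat[symmetric, OF Pt P Q])
  also have "\<dots> = Q" unfolding PP using Q by simp
  finally show ?thesis .
qed

lemma index_transpose_mult: "A \<in> carrier_mat r a \<Longrightarrow> B \<in> carrier_mat r b \<Longrightarrow> i < a \<Longrightarrow> j < b \<Longrightarrow>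
  (transpose_mat A * B) $$ (i, j) = col A i \<bullet> col B j"
  by simp

lemma hcat_orthonormal_split:
  assumes A: "A \<in> carrier_mat r a" and B: "B \<in> carrier_mat r b"
    and H: "transpose_mat (hcat A B) * hcat A B = 1\<^sub>m (a + b)"
  shows "transpose_mat A * A = 1\<^sub>m a" "transpose_mat B * B = 1\<^sub>m b" "transpose_mat A * B = 0\<^sub>m a b"
proof -
  have Hc: "hcat A B \<in> carrier_mat r (a + b)" by (rule hcat_carrier[OF A B])
  have e: "col (hcat A B) i \<bullet> col (hcat A B) j = (if i = j then 1 else 0)" if "i < a + b" "j < a + b" for i j
    using index_transpose_mult[OF Hc Hc that] H that by simp
  show "transpose_mat A * A = 1\<^sub>m a"
  proof (rule eq_matI)
    fix i j assume "i < dim_row (1\<^sub>m a)" "j < dim_col (1\<^sub>m a)"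
    hence ij: "i < a" "j < a" by auto
    have "(transpose_mat A * A) $$ (i, j) = col (hcat A B) i \<bullet> col (hcat A B) j"
      using index_transpose_mult[OF A A ij] col_hcat_left[OF A B ij(1)] col_hcat_left[OF A B ij(2)] by simp
    also have "\<dots> = 1\<^sub>m a $$ (i, j)" using e[of i j] ij by simp
    finally show "(transpose_mat A * A) $$ (i, j) = 1\<^sub>m a $$ (i, j)" .
  qed (use A in auto)
  show "transpose_mat B * B = 1\<^sub>m b"
  proof (rule eq_matI)
    fix i j assume "i < dim_row (1\<^sub>m b)" "j < dim_col (1\<^sub>m b)"
    hence ij: "i < b" "j < b" by auto
    have "(transpose_mat B * B) $$ (i, j) = col (hcat A B) (a + i) \<bullet> col (hcat A B) (a + j)"
      using index_transpose_mult[OF B B ij] col_hcat_right[OF A B ij(1)] col_hcat_right[OF A B ij(2)] by simp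
    also have "\<dots> = 1\<^sub>m b $$ (i, j)" using e[of "a + i" "a + j"] ij by simp
    finally show "(transpose_mat B * B) $$ (i, j) = 1\<^sub>m b $$ (i, j)" .
  qed (use B in auto)
  show "transpose_mat A * B = 0\<^sub>m a b"
  proof (rule eq_matI)
    fix i j assume "i < dim_row (0\<^sub>m a b)" "j < dim_col (0\<^sub>m a b)"
    hence ij: "i < a" "j < b" by auto
    have "(transpose_mat A * B) $$ (i, j) = col (hcat A B) i \<bullet> col (hcat A B) (a + j)"
      using index_transpose_mult[OF A B ij] col_hcat_left[OF A B ij(1)] col_hcat_right[OF A B ij(2)] by simp
    also have "\<dots> = 0\<^sub>m a b $$ (i, j)" using e[of i "a + j"] ij by simp
    finally show "(transpose_mat A * B) $$ (i, j) = 0\<^sub>m a b $$ (i, j)" .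
  qed (use A B in auto)
qed

lemma sandwich_assoc:
  fixes T B S A :: "real mat"
  assumes T: "T \<in> carrier_mat a r" and B: "B \<in> carrier_mat r b" and S: "S \<in> carrier_mat b b" and A: "A \<in> carrier_mat r c"
  shows "T * (B * S * transpose_mat B) * A = (T * B) * S * (transpose_mat B * A)"
proof -
  have Bt: "transpose_mat B \<in> carrier_mat b r" using B by simp
  have BS: "B * S \<in> carrier_mat r b" using B S by simp
  have BSBt: "B * S * transpose_mat B \<in> carrier_mat r r" using BS Bt by simp
  have "T * (B * S * transpose_mat B) * A = T * ((B * S * transpose_mat B) * A)"
    by (rule assoc_mult_mat[OF T BSBt A])
  also have "(B * S * transpose_mat B) * A = (B * S) * (transpose_mat B * A)"
    by (rule assoc_mult_mat[OF BS Bt A])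
  also have "T * ((B * S) * (transpose_mat B * A)) = (T * (B * S)) * (transpose_mat B * A)"
    by (rule assoc_mult_mat[symmetric, OF T BS, of _ c]) (use Bt A in simp)
  also have "T * (B * S) = (T * B) * S" by (rule assoc_mult_mat[symmetric, OF T B S])
  finally show ?thesis .
qed

lemma congruence_mult_assoc:
  fixes P Q S :: "real mat"
  assumes P: "P \<in> carrier_mat n r" and Q: "Q \<in> carrier_mat r q" and S: "S \<in> carrier_mat q q"
  shows "P * Q * S * transpose_mat Q * transpose_mat P = (P * Q) * S * transpose_mat (P * Q)"
proof -
  have PQS: "P * Q * S \<in> carrier_mat n q" using P Q S by simp
  have Qt: "transpose_mat Q \<in> carrier_mat q r" and Pt: "transpose_mat P \<in> carrier_mat r n" using P Q by auto
  have "transpose_mat (P * Q) = transpose_mat Q * transpose_mat P" by (rule transpose_mult[OF P Q])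
  thus ?thesis using assoc_mult_mat[OF PQS Qt Pt] by simp
qed

lemma transpose_mult_eq_zero_swap:
  fixes A B :: "real mat"
  assumes "A \<in> carrier_mat r a" "B \<in> carrier_mat r b" "transpose_mat A * B = 0\<^sub>m a b"
  shows "transpose_mat B * A = 0\<^sub>m b a"
proof -
  have "transpose_mat B * A = transpose_mat (transpose_mat A * B)"
    using transpose_mult[of "transpose_mat A" a r B b] assms(1,2) by simp
  thus ?thesis unfolding assms(3) by (auto intro: eq_matI)
qed

lemma block_congruence_extract:
  fixes A B S1 S2 :: "real mat"
  assumes A: "A \<in> carrier_mat r a" and B: "B \<in> carrier_mat r b" and S1: "S1 \<in> carrier_mat a a"
    and S2: "S2 \<in> carrier_mat b b" and AA: "transpose_mat A * A = 1\<^sub>m a" and AB: "transpose_mat A * B = 0\<^sub>m a b"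
  shows "transpose_mat A * (A * S1 * transpose_mat A + B * S2 * transpose_mat B) * A = S1"
proof -
  have BA: "transpose_mat B * A = 0\<^sub>m b a" by (rule transpose_mult_eq_zero_swap[OF A B AB])
  have X: "A * S1 * transpose_mat A \<in> carrier_mat r r" and Y: "B * S2 * transpose_mat B \<in> carrier_mat r r"
    using A B S1 S2 by auto
  have "transpose_mat A * (A * S1 * transpose_mat A + B * S2 * transpose_mat B) * A
      = transpose_mat A * (A * S1 * transpose_mat A) * A + transpose_mat A * (B * S2 * transpose_mat B) * A"
    using A X Y by (simp add: mult_add_distrib_mat[of _ a r] add_mult_distrib_mat[of _ a r] del: assoc_mult_mat)
  also have "transpose_mat A * (A * S1 * transpose_mat A) * A = (transpose_mat A * A) * S1 * (transpose_mat A * A)"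
    by (rule sandwich_assoc[OF _ A S1 A]) (use A in simp)
  also have "\<dots> = S1" unfolding AA using S1 by simp
  also have "transpose_mat A * (B * S2 * transpose_mat B) * A = (transpose_mat A * B) * S2 * (transpose_mat B * A)"
    by (rule sandwich_assoc[OF _ B S2 A]) (use A in simp)
  also have "\<dots> = 0\<^sub>m a a" unfolding AB BA using S2 by simp
  finally show ?thesis using S1 by simp
qed

lemma psd_orthonormal_split:
  assumes S: "psd r S" and S_eq: "S = Q1 * \<Sigma>1 * transpose_mat Q1 + Q2 * \<Sigma>2 * transpose_mat Q2"
    and Q: "Q1 \<in> carrier_mat r k1" "Q2 \<in> carrier_mat r k2" "transpose_mat (hcat Q1 Q2) * hcat Q1 Q2 = 1\<^sub>m (k1 + k2)"
    and \<Sigma>: "\<Sigma>1 \<in> carrier_mat k1 k1" "\<Sigma>2 \<in> carrier_mat k2 k2"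
  shows "psd k1 \<Sigma>1" "psd k2 \<Sigma>2" "mtrace S = mtrace \<Sigma>1 + mtrace \<Sigma>2"
proof -
  note orth = hcat_orthonormal_split[OF Q]
  have Q21: "transpose_mat Q2 * Q1 = 0\<^sub>m k2 k1" by (rule transpose_mult_eq_zero_swap[OF Q(1,2) orth(3)])
  have "transpose_mat Q1 * S * Q1 = \<Sigma>1"
    unfolding S_eq by (rule block_congruence_extract[OF Q(1,2) \<Sigma> orth(1,3)])
  thus "psd k1 \<Sigma>1" using psd_congruence[OF S, of "transpose_mat Q1" k1] Q by simp
  have "S = Q2 * \<Sigma>2 * transpose_mat Q2 + Q1 * \<Sigma>1 * transpose_mat Q1"
    unfolding S_eq using Q \<Sigma> by (intro comm_add_mat[of _ r r]) auto
  hence "transpose_mat Q2 * S * Q2 = \<Sigma>2"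
    using block_congruence_extract[OF Q(2,1) \<Sigma>(2,1) orth(2) Q21] by simp
  thus "psd k2 \<Sigma>2" using psd_congruence[OF S, of "transpose_mat Q2" k2] Q by simp
  show "mtrace S = mtrace \<Sigma>1 + mtrace \<Sigma>2"
    unfolding S_eq using Q \<Sigma> mtrace_congruence_orthonormal[OF Q(1) orth(1) \<Sigma>(1)]
      mtrace_congruence_orthonormal[OF Q(2) orth(2) \<Sigma>(2)] by (simp add: mtrace_add[of _ r])
qed

lemma congruence_lincomb:
  fixes P S1 S2 :: "real mat"
  assumes P: "P \<in> carrier_mat n k" and S: "S1 \<in> carrier_mat k k" "S2 \<in> carrier_mat k k"
  shows "P * (a \<cdot>\<^sub>m S1 + b \<cdot>\<^sub>m S2) * transpose_mat P
    = a \<cdot>\<^sub>m (P * S1 * transpose_mat P) + b \<cdot>\<^sub>m (P * S2 * transpose_mat P)"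
proof -
  have Pt: "transpose_mat P \<in> carrier_mat k n" using P by simp
  have "P * (a \<cdot>\<^sub>m S1 + b \<cdot>\<^sub>m S2) = P * (a \<cdot>\<^sub>m S1) + P * (b \<cdot>\<^sub>m S2)"
    by (rule mult_add_distrib_mat[OF P]) (use S in auto)
  also have "\<dots> = a \<cdot>\<^sub>m (P * S1) + b \<cdot>\<^sub>m (P * S2)"
    using mult_smult_distrib[OF P S(1)] mult_smult_distrib[OF P S(2)] by simp
  finally have "P * (a \<cdot>\<^sub>m S1 + b \<cdot>\<^sub>m S2) * transpose_mat P
      = a \<cdot>\<^sub>m (P * S1) * transpose_mat P + b \<cdot>\<^sub>m (P * S2) * transpose_mat P"
    using add_mult_distrib_mat[OF _ _ Pt, of "a \<cdot>\<^sub>m (P * S1)" n "b \<cdot>\<^sub>m (P * S2)"] P S by simp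
  also have "\<dots> = a \<cdot>\<^sub>m (P * S1 * transpose_mat P) + b \<cdot>\<^sub>m (P * S2 * transpose_mat P)"
    using mult_smult_assoc_mat[OF _ Pt, of "P * S1" n a] mult_smult_assoc_mat[OF _ Pt, of "P * S2" n b] P S
    by simp
  finally show ?thesis .
qed

section \<open>The model sets\<close>

lemma What_psd_mtrace_le:
  assumes Wb: "psd n Wb" "mtrace Wb = 1" and P: "P \<in> carrier_mat n k" "transpose_mat P * P = 1\<^sub>m k"
    and W: "W \<in> What \<rho> Wb P"
  shows "psd n W" "mtrace W \<le> \<rho>"
proof -
  obtain \<gamma> S where W: "W = \<gamma> \<cdot>\<^sub>m Wb + P * S * transpose_mat P" and S: "psd k S"
    and \<gamma>: "0 \<le> \<gamma>" "\<gamma> + mtrace S \<le> \<rho>"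
    using W P unfolding What_def by auto
  have Sc: "S \<in> carrier_mat k k" and Wbc: "Wb \<in> carrier_mat n n" using S Wb psd_carrier by auto
  show "psd n W" unfolding W by (intro psd_add psd_smult Wb(1) \<gamma>(1) psd_congruence[OF S P(1)])
  have "mtrace W = \<gamma> * mtrace Wb + mtrace S"
    unfolding W using P Sc Wbc mtrace_congruence_orthonormal[OF P Sc]
    by (simp add: mtrace_add[of _ n] mtrace_smult)
  thus "mtrace W \<le> \<rho>" using Wb(2) \<gamma> by simp
qed

lemma zero_in_What:
  assumes Wb: "Wb \<in> carrier_mat n n" and P: "P \<in> carrier_mat n k" and \<rho>: "0 \<le> \<rho>"
  shows "0\<^sub>m n n \<in> What \<rho> Wb P"
proof -
  have "psd k (0\<^sub>m k k)" unfolding psd_def symm_def by (auto simp: scalar_prod_def)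
  moreover have "mtrace (0\<^sub>m k k) = 0" unfolding mtrace_def by simp
  moreover have "0\<^sub>m n n = 0 \<cdot>\<^sub>m Wb + P * 0\<^sub>m k k * transpose_mat P" using Wb P by (intro eq_matI) auto
  ultimately show ?thesis unfolding What_def using P \<rho> by fastforce
qed

lemma What_convex:
  assumes Wb: "Wb \<in> carrier_mat n n" and P: "P \<in> carrier_mat n k"
    and W1: "W1 \<in> What \<rho> Wb P" and W2: "W2 \<in> What \<rho> Wb P" and s: "0 \<le> s" "s \<le> 1"
  shows "W1 + s \<cdot>\<^sub>m (W2 - W1) \<in> What \<rho> Wb P"
proof -
  obtain g1 S1 where W1e: "W1 = g1 \<cdot>\<^sub>m Wb + P * S1 * transpose_mat P" and S1: "psd k S1"
    and g1: "0 \<le> g1" "g1 + mtrace S1 \<le> \<rho>" using W1 P unfolding What_def by auto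
  obtain g2 S2 where W2e: "W2 = g2 \<cdot>\<^sub>m Wb + P * S2 * transpose_mat P" and S2: "psd k S2"
    and g2: "0 \<le> g2" "g2 + mtrace S2 \<le> \<rho>" using W2 P unfolding What_def by auto
  have S1c: "S1 \<in> carrier_mat k k" and S2c: "S2 \<in> carrier_mat k k" using S1 S2 psd_carrier by auto
  define g where "g = (1 - s) * g1 + s * g2"
  define S where "S = (1 - s) \<cdot>\<^sub>m S1 + s \<cdot>\<^sub>m S2"
  have pS: "psd k S" unfolding S_def using s by (intro psd_add psd_smult S1 S2) auto
  have g: "0 \<le> g" unfolding g_def using s g1 g2 by simp
  have "g + mtrace S = (1 - s) * (g1 + mtrace S1) + s * (g2 + mtrace S2)"
    unfolding S_def g_def using S1c S2c by (simp add: mtrace_add[of _ k] mtrace_smult algebra_simps)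
  also have "\<dots> \<le> (1 - s) * \<rho> + s * \<rho>" using s g1 g2 by (intro add_mono mult_left_mono) auto
  finally have gS: "g + mtrace S \<le> \<rho>" by (simp add: algebra_simps)
  have PS: "P * S * transpose_mat P
      = (1 - s) \<cdot>\<^sub>m (P * S1 * transpose_mat P) + s \<cdot>\<^sub>m (P * S2 * transpose_mat P)"
    unfolding S_def by (rule congruence_lincomb[OF P S1c S2c])
  have "W1 + s \<cdot>\<^sub>m (W2 - W1) = g \<cdot>\<^sub>m Wb + P * S * transpose_mat P"
    unfolding PS W1e W2e g_def using Wb P S1c S2c by (intro eq_matI) (auto simp: algebra_simps)
  thus ?thesis unfolding What_def using pS g gS P by (intro CollectI exI[of _ g] exI[of _ S]) auto
qed

text \<open>Columns in the range of \<open>P\<close> can be re-expressed in the basis \<open>P\<close>: with \<open>K = P\<^sup>T B\<close> one has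
  \<open>B S B\<^sup>T = P (K S K\<^sup>T) P\<^sup>T\<close>, and \<open>K\<close> still has orthonormal columns.\<close>

lemma congruence_in_What:
  assumes Wb: "Wb \<in> carrier_mat n n"
    and P: "P \<in> carrier_mat n k" "transpose_mat P * P = 1\<^sub>m k"
    and B: "B \<in> carrier_mat n q" "transpose_mat B * B = 1\<^sub>m q" and cols: "\<forall>j<q. col B j \<in> colspace P"
    and S: "psd q S" and \<gamma>: "0 \<le> \<gamma>" "\<gamma> + mtrace S \<le> \<rho>"
  shows "\<gamma> \<cdot>\<^sub>m Wb + B * S * transpose_mat B \<in> What \<rho> Wb P"
proof -
  define K where "K = transpose_mat P * B"
  have Kc: "K \<in> carrier_mat k q" unfolding K_def using P B by simp
  have Sc: "S \<in> carrier_mat q q" by (rule psd_carrier[OF S])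
  have PK: "P * K = B"
  proof (rule mat_col_eqI)
    fix j assume "j < dim_col B"
    hence j: "j < q" using B by simp
    have "col (P * K) j = P *\<^sub>v col K j" by (rule col_mult2[OF P(1) Kc j])
    also have "col K j = transpose_mat P *\<^sub>v col B j"
      unfolding K_def by (rule col_mult2[OF _ B(1) j]) (use P in simp)
    also have "P *\<^sub>v (transpose_mat P *\<^sub>v col B j) = col B j"
      using cols j by (simp add: orthonormal_colspace_proj[OF P])
    finally show "col (P * K) j = col B j" .
  qed (use P Kc B in auto)
  have KK: "transpose_mat K * K = 1\<^sub>m q" using gram_mult_orthonormal_left[OF P Kc] PK B by simp
  have "P * (K * S * transpose_mat K) * transpose_mat P = (P * K) * S * (transpose_mat K * transpose_mat P)"
    by (rule sandwich_assoc[OF P(1) Kc Sc]) (use P in simp)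
  also have "transpose_mat K * transpose_mat P = transpose_mat (P * K)"
    by (rule transpose_mult[OF P(1) Kc, symmetric])
  finally have PSP: "B * S * transpose_mat B = P * (K * S * transpose_mat K) * transpose_mat P"
    by (simp only: PK)
  have "psd k (K * S * transpose_mat K)" by (rule psd_congruence[OF S Kc])
  moreover have "mtrace (K * S * transpose_mat K) = mtrace S"
    by (rule mtrace_congruence_orthonormal[OF Kc KK Sc])
  ultimately show ?thesis unfolding What_def PSP using P \<gamma>
    by (intro CollectI exI[of _ \<gamma>] exI[of _ "K * S * transpose_mat K"]) auto
qed

lemma outer_in_What:
  assumes Wb: "Wb \<in> carrier_mat n n"
    and P: "P \<in> carrier_mat n k" "transpose_mat P * P = 1\<^sub>m k"
    and v: "v \<in> colspace P" "v \<in> carrier_vec n" "v \<bullet> v = 1" and \<rho>: "0 \<le> \<rho>"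
  shows "\<rho> \<cdot>\<^sub>m outer v \<in> What \<rho> Wb P"
proof -
  define u where "u = transpose_mat P *\<^sub>v v"
  have u: "u \<in> carrier_vec k" unfolding u_def using P v by simp
  have Pu: "P *\<^sub>v u = v" unfolding u_def by (rule orthonormal_colspace_proj[OF P v(1)])
  have "u \<bullet> u = 1" using transpose_vec_mult_scalar[OF P(1) u v(2)] Pu v(3) unfolding u_def by simp
  hence "psd k (\<rho> \<cdot>\<^sub>m outer u)" "mtrace (\<rho> \<cdot>\<^sub>m outer u) = \<rho>"
    using psd_smult[OF psd_outer[OF u] \<rho>] mtrace_smult[OF outer_carrier[OF u]] mtrace_outer[OF u] by auto
  moreover have "\<rho> \<cdot>\<^sub>m outer v = 0 \<cdot>\<^sub>m Wb + P * (\<rho> \<cdot>\<^sub>m outer u) * transpose_mat P"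
  proof -
    have "P * (\<rho> \<cdot>\<^sub>m outer u) * transpose_mat P = \<rho> \<cdot>\<^sub>m (P * outer u * transpose_mat P)"
      using P outer_carrier[OF u]
      by (simp add: mult_smult_distrib[of _ n k] mult_smult_assoc_mat[of _ n k] del: assoc_mult_mat)
    also have "\<dots> = \<rho> \<cdot>\<^sub>m outer v" using congruence_outer[OF P(1) u] Pu by simp
    finally show ?thesis using Wb v by (intro eq_matI) (auto simp: outer_def)
  qed
  ultimately show ?thesis unfolding What_def using P by force
qed

lemma frob_What_le:
  assumes Wb: "psd n Wb" "mtrace Wb = 1" and P: "P \<in> carrier_mat n k" "transpose_mat P * P = 1\<^sub>m k"
    and X: "symm n X" and n: "0 < n" and W: "W \<in> What \<rho> Wb P"
  shows "frob W (- X) \<le> \<rho> * max (lmax (- X)) 0"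
proof -
  have pW: "psd n W" and tW: "mtrace W \<le> \<rho>" using What_psd_mtrace_le[OF Wb P W] by auto
  have "frob W (- X) \<le> mtrace W * lmax (- X)" by (rule frob_psd_le_mtrace_lmax[OF pW symm_uminus[OF X] n])
  also have "\<dots> \<le> \<rho> * max (lmax (- X)) 0"
    using tW mtrace_psd_nonneg[OF pW] by (cases "lmax (- X) \<ge> 0") (auto intro: mult_right_mono mult_nonneg_nonpos)
  finally show ?thesis .
qed

lemma Fhat_le_Fobj:
  assumes Wb: "psd n Wb" "mtrace Wb = 1" and P: "P \<in> carrier_mat n k" "transpose_mat P * P = 1\<^sub>m k"
    and X: "symm n X" and n: "0 < n" and \<rho>: "0 \<le> \<rho>"
  shows "Fhat \<rho> C Wb P X \<le> Fobj \<rho> C X"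
proof -
  have "What \<rho> Wb P \<noteq> {}" using zero_in_What[OF psd_carrier[OF Wb(1)] P(1) \<rho>] by auto
  hence "(SUP W\<in>What \<rho> Wb P. frob W (- X)) \<le> \<rho> * max (lmax (- X)) 0"
    using frob_What_le[OF Wb P X n] by (intro cSUP_least) auto
  thus ?thesis unfolding Fhat_def Fobj_def by simp
qed

lemma Fhat_ge_linear:
  assumes Wb: "psd n Wb" "mtrace Wb = 1" and P: "P \<in> carrier_mat n k" "transpose_mat P * P = 1\<^sub>m k"
    and X: "symm n X" and n: "0 < n" and W: "W \<in> What \<rho> Wb P"
  shows "frob C X + frob W (- X) \<le> Fhat \<rho> C Wb P X"
proof -
  have "bdd_above ((\<lambda>W. frob W (- X)) ` What \<rho> Wb P)"
    using frob_What_le[OF Wb P X n] by (intro bdd_aboveI2) blast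
  hence "frob W (- X) \<le> (SUP W\<in>What \<rho> Wb P. frob W (- X))" by (rule cSUP_upper[OF W])
  thus ?thesis unfolding Fhat_def by simp
qed

lemma normalized_aggregate_psd_mtrace:
  assumes Wb: "psd n Wb" "mtrace Wb = 1" and B: "B \<in> carrier_mat n q" "transpose_mat B * B = 1\<^sub>m q"
    and \<Sigma>: "psd q \<Sigma>" and \<gamma>: "0 \<le> \<gamma>" and pos: "0 < \<gamma> + mtrace \<Sigma>"
  shows "psd n ((1 / (\<gamma> + mtrace \<Sigma>)) \<cdot>\<^sub>m (\<gamma> \<cdot>\<^sub>m Wb + B * \<Sigma> * transpose_mat B))"
    "mtrace ((1 / (\<gamma> + mtrace \<Sigma>)) \<cdot>\<^sub>m (\<gamma> \<cdot>\<^sub>m Wb + B * \<Sigma> * transpose_mat B)) = 1"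
proof -
  have Wbc: "Wb \<in> carrier_mat n n" and \<Sigma>c: "\<Sigma> \<in> carrier_mat q q" using Wb \<Sigma> psd_carrier by auto
  show "psd n ((1 / (\<gamma> + mtrace \<Sigma>)) \<cdot>\<^sub>m (\<gamma> \<cdot>\<^sub>m Wb + B * \<Sigma> * transpose_mat B))"
    using pos by (intro psd_smult psd_add Wb(1) \<gamma> psd_congruence[OF \<Sigma> B(1)]) auto
  have "mtrace (\<gamma> \<cdot>\<^sub>m Wb + B * \<Sigma> * transpose_mat B) = \<gamma> + mtrace \<Sigma>"
    using Wbc B \<Sigma>c Wb(2) mtrace_congruence_orthonormal[OF B \<Sigma>c] by (simp add: mtrace_add[of _ n] mtrace_smult)
  thus "mtrace ((1 / (\<gamma> + mtrace \<Sigma>)) \<cdot>\<^sub>m (\<gamma> \<cdot>\<^sub>m Wb + B * \<Sigma> * transpose_mat B)) = 1"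
    using pos B \<Sigma>c Wbc by (simp add: mtrace_smult[of _ n])
qed
section \<open>Optimality conditions of the proximal subproblem\<close>

lemma fnorm_sq_eq_sum: assumes X: "X \<in> carrier_mat n n"
  shows "(fnorm X)\<^sup>2 = (\<Sum>i<n. \<Sum>j<n. (X $$ (i, j))\<^sup>2)"
proof -
  have "frob (transpose_mat X) X = (\<Sum>i<n. \<Sum>j<n. X $$ (j, i) * X $$ (j, i))"
    using X by (subst frob_eq_sum[of _ n n]) (auto intro!: sum.cong)
  also have "\<dots> = (\<Sum>i<n. \<Sum>j<n. (X $$ (i, j))\<^sup>2)" by (subst sum.swap) (simp add: power2_eq_square)
  finally have e: "frob (transpose_mat X) X = (\<Sum>i<n. \<Sum>j<n. (X $$ (i, j))\<^sup>2)" .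
  have "0 \<le> (\<Sum>i<n. \<Sum>j<n. (X $$ (i, j))\<^sup>2)" by (intro sum_nonneg) auto
  thus ?thesis unfolding fnorm_def e by simp
qed

lemma fnorm_add_smult_sq: assumes G: "G \<in> carrier_mat n n" and H: "symm n H"
  shows "(fnorm (G + t \<cdot>\<^sub>m H))\<^sup>2 = (fnorm G)\<^sup>2 + t * (2 * frob G H) + t\<^sup>2 * (fnorm H)\<^sup>2"
proof -
  have Hc: "H \<in> carrier_mat n n" using H symm_carrier by auto
  have Hs: "H $$ (i, j) = H $$ (j, i)" if "i < n" "j < n" for i j
    using H that unfolding symm_def by (metis carrier_matD index_transpose_mat(1))
  have fr: "frob G H = (\<Sum>i<n. \<Sum>j<n. G $$ (i, j) * H $$ (i, j))"
    unfolding frob_eq_sum[OF G Hc] using Hs by (auto intro!: sum.cong)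
  have "(fnorm (G + t \<cdot>\<^sub>m H))\<^sup>2 = (\<Sum>i<n. \<Sum>j<n. (G $$ (i, j) + t * H $$ (i, j))\<^sup>2)"
    using G Hc by (subst fnorm_sq_eq_sum[of _ n]) (auto intro!: sum.cong)
  also have "\<dots> = (\<Sum>i<n. \<Sum>j<n. (G $$ (i, j))\<^sup>2) + t * (2 * (\<Sum>i<n. \<Sum>j<n. G $$ (i, j) * H $$ (i, j)))
        + t\<^sup>2 * (\<Sum>i<n. \<Sum>j<n. (H $$ (i, j))\<^sup>2)"
    by (simp add: power2_eq_square algebra_simps sum.distrib sum_distrib_left)
  finally show ?thesis using fnorm_sq_eq_sum[OF G] fnorm_sq_eq_sum[OF Hc] fr by simp
qed

lemma Astar_carrier: "Astar n m A y \<in> carrier_mat n n" unfolding Astar_def by simp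

lemma Astar_add_smult_unit_vec: assumes ys: "ys \<in> carrier_vec m" and k: "k < m" and Ak: "A k \<in> carrier_mat n n"
  shows "Astar n m A (ys + t \<cdot>\<^sub>v unit_vec m k) = Astar n m A ys + t \<cdot>\<^sub>m A k"
proof (rule eq_matI)
  fix i j assume "i < dim_row (Astar n m A ys + t \<cdot>\<^sub>m A k)" "j < dim_col (Astar n m A ys + t \<cdot>\<^sub>m A k)"
  hence ij: "i < n" "j < n" using Ak by (auto simp: Astar_def)
  have "(\<Sum>l<m. (ys + t \<cdot>\<^sub>v unit_vec m k) $ l * A l $$ (i, j))
      = (\<Sum>l<m. ys $ l * A l $$ (i, j) + (if l = k then t * A l $$ (i, j) else 0))"
    using ys by (intro sum.cong) (auto simp: algebra_simps unit_vec_def)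
  also have "\<dots> = (\<Sum>l<m. ys $ l * A l $$ (i, j)) + t * A k $$ (i, j)"
    using k by (simp add: sum.distrib sum.delta)
  finally show "Astar n m A (ys + t \<cdot>\<^sub>v unit_vec m k) $$ (i, j) = (Astar n m A ys + t \<cdot>\<^sub>m A k) $$ (i, j)"
    using ij carrier_matD[OF Ak] by (simp add: Astar_def)
qed (use Ak in \<open>auto simp: Astar_def\<close>)

lemma frob_Astar:
  assumes Ai: "\<forall>k<m. A k \<in> carrier_mat n n" and Y: "Y \<in> carrier_mat n n"
  shows "frob (Astar n m A y) Y = (\<Sum>k<m. y $ k * frob (A k) Y)"
proof -
  have "frob (Astar n m A y) Y = (\<Sum>i<n. \<Sum>j<n. (\<Sum>k<m. y $ k * A k $$ (i, j)) * Y $$ (j, i))"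
    using Y by (subst frob_eq_sum[of _ n n]) (auto simp: Astar_def intro!: sum.cong)
  also have "\<dots> = (\<Sum>i<n. \<Sum>j<n. \<Sum>k<m. y $ k * (A k $$ (i, j) * Y $$ (j, i)))"
    by (simp add: sum_distrib_right mult.assoc)
  also have "\<dots> = (\<Sum>i<n. \<Sum>k<m. \<Sum>j<n. y $ k * (A k $$ (i, j) * Y $$ (j, i)))"
    by (rule sum.cong[OF refl]) (rule sum.swap)
  also have "\<dots> = (\<Sum>k<m. \<Sum>i<n. \<Sum>j<n. y $ k * (A k $$ (i, j) * Y $$ (j, i)))"
    by (rule sum.swap)
  also have "\<dots> = (\<Sum>k<m. y $ k * frob (A k) Y)"
    using Ai Y by (intro sum.cong refl) (simp add: frob_eq_sum[of _ n n] sum_distrib_left)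
  finally show ?thesis .
qed

lemma prox_y_optimality:
  assumes Kc: "K \<in> carrier_mat n n" and Ai: "\<forall>i<m. symm n (A i)" and ys: "ys \<in> carrier_vec m"
    and d: "d \<in> carrier_vec m" and alpha: "\<alpha> > 0"
    and min: "\<forall>y\<in>carrier_vec m. c0 - d \<bullet> ys + 1 / (2 * \<alpha>) * (fnorm (K + Astar n m A ys))\<^sup>2
        \<le> c0 - d \<bullet> y + 1 / (2 * \<alpha>) * (fnorm (K + Astar n m A y))\<^sup>2"
    and k: "k < m"
  shows "d $ k = (1 / \<alpha>) * frob (K + Astar n m A ys) (A k)"
proof -
  define G where "G = K + Astar n m A ys"
  have Gc: "G \<in> carrier_mat n n" unfolding G_def using Kc by (simp add: Astar_carrier)
  have H: "symm n (A k)" using Ai k by auto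
  have Hc: "A k \<in> carrier_mat n n" using H symm_carrier by auto
  define f2 where "f2 = (fnorm (A k))\<^sup>2"
  have "(d $ k - frob G (A k) / \<alpha>) * t + (- f2 / (2 * \<alpha>)) * t\<^sup>2 \<le> 0" for t
  proof -
    define y where "y = ys + t \<cdot>\<^sub>v unit_vec m k"
    have y: "y \<in> carrier_vec m" unfolding y_def using ys by simp
    have Ay: "K + Astar n m A y = G + t \<cdot>\<^sub>m A k"
      unfolding y_def Astar_add_smult_unit_vec[of ys m k A n t, OF ys k Hc] G_def using Kc Hc
      by (intro eq_matI) (auto simp: Astar_def)
    have dy: "d \<bullet> y = d \<bullet> ys + t * d $ k"
      unfolding y_def using d ys k by (simp add: scalar_prod_add_distrib[of _ m])
    have "c0 - d \<bullet> ys + 1 / (2 * \<alpha>) * (fnorm G)\<^sup>2 \<le> c0 - d \<bullet> y + 1 / (2 * \<alpha>) * (fnorm (G + t \<cdot>\<^sub>m A k))\<^sup>2"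
      using min y unfolding G_def[symmetric] Ay[symmetric] by blast
    also have "\<dots> = c0 - d \<bullet> ys - t * d $ k + 1 / (2 * \<alpha>) * ((fnorm G)\<^sup>2 + t * (2 * frob G (A k)) + t\<^sup>2 * (fnorm (A k))\<^sup>2)"
      unfolding fnorm_add_smult_sq[OF Gc H] dy f2_def by simp
    finally show ?thesis
      using alpha by (simp add: field_simps f2_def)
  qed
  hence "d $ k - frob G (A k) / \<alpha> = 0" by (rule quadratic_nonpos_imp_linear_coeff_zero)
  thus ?thesis unfolding G_def by simp
qed

lemma prox_W_variational_inequality:
  assumes Wb: "Wb \<in> carrier_mat n n" and P: "P \<in> carrier_mat n k"
    and Ws: "Ws \<in> What \<rho> Wb P" and W: "W \<in> What \<rho> Wb P"
    and sWs: "symm n Ws" and sW: "symm n W"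
    and C: "C \<in> carrier_mat n n" and Om: "\<Omega> \<in> carrier_mat n n" and Y: "Y \<in> carrier_mat n n"
    and min: "\<forall>W\<in>What \<rho> Wb P. frob (Ws - C) \<Omega> - e + 1 / (2 * \<alpha>) * (fnorm (Ws - C + Y))\<^sup>2
        \<le> frob (W - C) \<Omega> - e + 1 / (2 * \<alpha>) * (fnorm (W - C + Y))\<^sup>2"
  shows "0 \<le> frob (W - Ws) \<Omega> + frob (Ws - C + Y) (W - Ws) / \<alpha>"
proof -
  define D where "D = W - Ws"
  define G where "G = Ws - C + Y"
  have Wsc: "Ws \<in> carrier_mat n n" using sWs symm_carrier by auto
  have Dc: "D \<in> carrier_mat n n" unfolding D_def by (rule minus_carrier_mat[OF Wsc])
  have sD: "symm n D" unfolding D_def by (rule symm_minus[OF sW sWs])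
  have Gc: "G \<in> carrier_mat n n" unfolding G_def using Y by simp
  have "0 \<le> (frob D \<Omega> + 1 / (2 * \<alpha>) * (2 * frob G D)) * s + (1 / (2 * \<alpha>) * (fnorm D)\<^sup>2) * s\<^sup>2"
    if s: "0 < s" "s \<le> 1" for s
  proof -
    have mem: "Ws + s \<cdot>\<^sub>m D \<in> What \<rho> Wb P" unfolding D_def
      by (rule What_convex[OF Wb P Ws W]) (use s in auto)
    have e1: "Ws + s \<cdot>\<^sub>m D - C = (Ws - C) + s \<cdot>\<^sub>m D"
      using Wsc Dc C by (intro eq_matI) auto
    have e2: "Ws + s \<cdot>\<^sub>m D - C + Y = G + s \<cdot>\<^sub>m D"
      unfolding G_def using Wsc Dc C Y by (intro eq_matI) auto
    have "frob (Ws - C) \<Omega> - e + 1 / (2 * \<alpha>) * (fnorm G)\<^sup>2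
        \<le> frob (Ws + s \<cdot>\<^sub>m D - C) \<Omega> - e + 1 / (2 * \<alpha>) * (fnorm (Ws + s \<cdot>\<^sub>m D - C + Y))\<^sup>2"
      using min mem unfolding G_def by blast
    also have "\<dots> = frob (Ws - C) \<Omega> + s * frob D \<Omega> - e
        + 1 / (2 * \<alpha>) * ((fnorm G)\<^sup>2 + s * (2 * frob G D) + s\<^sup>2 * (fnorm D)\<^sup>2)"
      unfolding e2 unfolding e1 fnorm_add_smult_sq[OF Gc sD]
      using Wsc C Dc Om by (simp add: frob_add_left[of _ n] frob_smult_left[of _ n] minus_carrier_mat)
    finally show ?thesis by (simp add: algebra_simps)
  qed
  hence "0 \<le> frob D \<Omega> + 1 / (2 * \<alpha>) * (2 * frob G D)"
    by (rule quadratic_nonneg_near_zero_imp_linear_coeff_nonneg)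
  thus ?thesis unfolding D_def G_def by simp
qed

lemma prox_W_optimality:
  assumes Wb: "Wb \<in> carrier_mat n n" and P: "P \<in> carrier_mat n k"
    and Ws: "Ws \<in> What \<rho> Wb P" and W: "W \<in> What \<rho> Wb P"
    and sWs: "symm n Ws" and sW: "symm n W"
    and C: "C \<in> carrier_mat n n" and Om: "\<Omega> \<in> carrier_mat n n" and Y: "Y \<in> carrier_mat n n"
    and alpha: "\<alpha> > 0"
    and min: "\<forall>W\<in>What \<rho> Wb P. frob (Ws - C) \<Omega> - e + 1 / (2 * \<alpha>) * (fnorm (Ws - C + Y))\<^sup>2
        \<le> frob (W - C) \<Omega> - e + 1 / (2 * \<alpha>) * (fnorm (W - C + Y))\<^sup>2"
  shows "frob W (- (\<Omega> + (1 / \<alpha>) \<cdot>\<^sub>m (Ws - C + Y))) \<le> frob Ws (- (\<Omega> + (1 / \<alpha>) \<cdot>\<^sub>m (Ws - C + Y)))"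
proof -
  define G where "G = Ws - C + Y"
  define X where "X = \<Omega> + (1 / \<alpha>) \<cdot>\<^sub>m G"
  have Wsc: "Ws \<in> carrier_mat n n" and Wc: "W \<in> carrier_mat n n" using sWs sW symm_carrier by auto
  have Dc: "W - Ws \<in> carrier_mat n n" by (rule minus_carrier_mat[OF Wsc])
  have Gc: "G \<in> carrier_mat n n" unfolding G_def using Y by simp
  have Xc: "X \<in> carrier_mat n n" unfolding X_def using Gc by simp
  have "frob W X - frob Ws X = frob (W - Ws) X" by (rule frob_minus_left[OF Wc Wsc Xc, symmetric])
  also have "\<dots> = frob (W - Ws) \<Omega> + frob G (W - Ws) / \<alpha>"
    unfolding X_def using Dc Om Gc frob_comm[OF Dc Gc]
    by (simp add: frob_add_right[of _ n] frob_smult_right[of _ n])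
  finally have "frob Ws X \<le> frob W X"
    using prox_W_variational_inequality[OF Wb P Ws W sWs sW C Om Y min] unfolding G_def by simp
  thus ?thesis unfolding G_def[symmetric] X_def[symmetric]
    using frob_uminus_right[OF Wc Xc] frob_uminus_right[OF Wsc Xc] by simp
qed

lemma Fhat_at_prox_point:
  assumes Wb: "psd n Wb" "mtrace Wb = 1" and P: "P \<in> carrier_mat n k" "transpose_mat P * P = 1\<^sub>m k"
    and Ws: "Ws \<in> What \<rho> Wb P" and C: "symm n C" and \<Omega>: "symm n \<Omega>" and Y: "Y \<in> carrier_mat n n"
    and \<alpha>: "\<alpha> > 0"
    and min: "\<forall>W\<in>What \<rho> Wb P. frob (Ws - C) \<Omega> - e + 1 / (2 * \<alpha>) * (fnorm (Ws - C + Y))\<^sup>2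
        \<le> frob (W - C) \<Omega> - e + 1 / (2 * \<alpha>) * (fnorm (W - C + Y))\<^sup>2"
    and Xs: "Xs = \<Omega> + (1 / \<alpha>) \<cdot>\<^sub>m (Ws - C + Y)"
  shows "Fhat \<rho> C Wb P Xs = frob C Xs + frob Ws (- Xs)"
proof -
  have sym: "symm n W" if "W \<in> What \<rho> Wb P" for W
    using What_psd_mtrace_le(1)[OF Wb P that] psd_symm by blast
  have "frob W (- Xs) \<le> frob Ws (- Xs)" if W: "W \<in> What \<rho> Wb P" for W
    unfolding Xs using prox_W_optimality[OF psd_carrier[OF Wb(1)] P(1) Ws W sym[OF Ws] sym[OF W]
        symm_carrier[OF C] symm_carrier[OF \<Omega>] Y \<alpha> min] .
  hence "(SUP W\<in>What \<rho> Wb P. frob W (- Xs)) = frob Ws (- Xs)"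
    using Ws by (intro cSup_eq_maximum) auto
  thus ?thesis unfolding Fhat_def by simp
qed

lemma prox_point_feasible:
  assumes K: "K \<in> carrier_mat n n" and Ai: "\<forall>i<m. symm n (A i)" and ys: "ys \<in> carrier_vec m"
    and b: "b \<in> carrier_vec m" and \<Omega>: "symm n \<Omega>" and \<alpha>: "\<alpha> > 0"
    and min: "\<forall>y\<in>carrier_vec m. c0 - (b - Aop m A \<Omega>) \<bullet> ys + 1 / (2 * \<alpha>) * (fnorm (K + Astar n m A ys))\<^sup>2
        \<le> c0 - (b - Aop m A \<Omega>) \<bullet> y + 1 / (2 * \<alpha>) * (fnorm (K + Astar n m A y))\<^sup>2"
  shows "Aop m A (\<Omega> + (1 / \<alpha>) \<cdot>\<^sub>m (K + Astar n m A ys)) = b"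
proof (rule eq_vecI)
  define G where "G = K + Astar n m A ys"
  have Gc: "G \<in> carrier_mat n n" unfolding G_def using K by (simp add: Astar_carrier)
  have \<Omega>c: "\<Omega> \<in> carrier_mat n n" by (rule symm_carrier[OF \<Omega>])
  fix k assume "k < dim_vec b"
  hence k: "k < m" using b by simp
  have Akc: "A k \<in> carrier_mat n n" using Ai k symm_carrier by blast
  have "b - Aop m A \<Omega> \<in> carrier_vec m" using b by (simp add: Aop_def)
  hence "(b - Aop m A \<Omega>) $ k = (1 / \<alpha>) * frob G (A k)"
    unfolding G_def by (rule prox_y_optimality[OF K Ai ys _ \<alpha> min k])
  hence "(1 / \<alpha>) * frob (A k) G = b $ k - frob (A k) \<Omega>"
    using b k frob_comm[OF Akc Gc] by (simp add: Aop_def)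
  moreover have "Aop m A (\<Omega> + (1 / \<alpha>) \<cdot>\<^sub>m G) $ k = frob (A k) \<Omega> + (1 / \<alpha>) * frob (A k) G"
    using k Akc \<Omega>c Gc by (simp add: Aop_def frob_add_right[of _ n] frob_smult_right[of _ n])
  ultimately show "Aop m A (\<Omega> + (1 / \<alpha>) \<cdot>\<^sub>m (K + Astar n m A ys)) $ k = b $ k"
    unfolding G_def by simp
qed (use b in \<open>simp add: Aop_def\<close>)

lemma prox_linearization:
  assumes Wb: "psd n Wb" "mtrace Wb = 1" and P: "P \<in> carrier_mat n k" "transpose_mat P * P = 1\<^sub>m k"
    and C: "symm n C" and Ai: "\<forall>i<m. symm n (A i)" and b: "b \<in> carrier_vec m"
    and \<Omega>: "symm n \<Omega>" and \<alpha>: "\<alpha> > 0"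
    and Ws: "Ws \<in> What \<rho> Wb P" and ys: "ys \<in> carrier_vec m"
    and min: "\<forall>W \<in> What \<rho> Wb P. \<forall>y \<in> carrier_vec m.
        frob (Ws - C) \<Omega> - (b - Aop m A \<Omega>) \<bullet> ys + 1 / (2 * \<alpha>) * (fnorm (Ws - C + Astar n m A ys))\<^sup>2
        \<le> frob (W - C) \<Omega> - (b - Aop m A \<Omega>) \<bullet> y + 1 / (2 * \<alpha>) * (fnorm (W - C + Astar n m A y))\<^sup>2"
    and Xs: "Xs = \<Omega> + (1 / \<alpha>) \<cdot>\<^sub>m (Ws - C + Astar n m A ys)"
    and X: "symm n X" "Aop m A X = b"
  shows "Fhat \<rho> C Wb P Xs + frob (\<alpha> \<cdot>\<^sub>m (\<Omega> - Xs)) (X - Xs) = frob C X + frob Ws (- X)"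
proof -
  define G where "G = Ws - C + Astar n m A ys"
  have Cc: "C \<in> carrier_mat n n" and \<Omega>c: "\<Omega> \<in> carrier_mat n n" and Xc: "X \<in> carrier_mat n n"
    and Wsc: "Ws \<in> carrier_mat n n"
    using C \<Omega> X psd_carrier[OF What_psd_mtrace_le(1)[OF Wb P Ws]] by (auto simp: symm_carrier)
  have Aic: "\<forall>i<m. A i \<in> carrier_mat n n" using Ai symm_carrier by blast
  have Gc: "G \<in> carrier_mat n n" unfolding G_def by (simp add: Astar_carrier)
  have Xsc: "Xs \<in> carrier_mat n n" unfolding Xs using \<Omega>c Gc G_def by simp
  have XX: "X - Xs \<in> carrier_mat n n" by (rule minus_carrier_mat[OF Xsc])
  have Fhat_Xs: "Fhat \<rho> C Wb P Xs = frob C Xs + frob Ws (- Xs)"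
    by (rule Fhat_at_prox_point[OF Wb P Ws C \<Omega> Astar_carrier \<alpha> _ Xs]) (use min ys in blast)
  have "Aop m A Xs = b" unfolding Xs
    by (rule prox_point_feasible[OF _ Ai ys b \<Omega> \<alpha>]) (use min Ws Wsc Cc in auto)
  hence "frob (A i) (X - Xs) = 0" if "i < m" for i
    using X(2) that Aic Xc Xsc by (simp add: frob_minus_right[of _ n] Aop_def) (metis index_vec)
  hence "frob (Astar n m A ys) (X - Xs) = 0" by (simp add: frob_Astar[OF Aic XX])
  hence "frob G (X - Xs) = frob Ws (X - Xs) - frob C (X - Xs)"
    unfolding G_def using frob_add_left[OF minus_carrier_mat[OF Cc] Astar_carrier XX, of Ws]
      frob_minus_left[OF Wsc Cc XX] by simp
  moreover have "\<alpha> \<cdot>\<^sub>m (\<Omega> - Xs) = (-1) \<cdot>\<^sub>m G"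
    unfolding Xs G_def[symmetric] using \<Omega>c Gc \<alpha> by (intro eq_matI) (auto simp: field_simps)
  ultimately show ?thesis
    unfolding Fhat_Xs using frob_smult_left[OF Gc XX] frob_minus_right[OF Wsc Xc Xsc]
      frob_minus_right[OF Cc Xc Xsc] frob_uminus_right[OF Wsc Xc] frob_uminus_right[OF Wsc Xsc] by simp
qed

section \<open>The updated model\<close>

lemma Fobj_linearization_le:
  assumes C: "C \<in> carrier_mat n n" and W: "W \<in> carrier_mat n n"
    and X: "X \<in> carrier_mat n n" and Y: "Y \<in> carrier_mat n n"
    and le: "\<rho> * max (lmax (- Y)) 0 \<le> frob W (- Y)"
  shows "Fobj \<rho> C Y + frob (C - W) (X - Y) \<le> frob C X + frob W (- X)"
proof -
  have XY: "X - Y \<in> carrier_mat n n" by (rule minus_carrier_mat[OF Y])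
  have "frob (C - W) (X - Y) = frob C X - frob C Y + frob W (- X) - frob W (- Y)"
    using frob_minus_left[OF C W XY] frob_minus_right[OF C X Y] frob_minus_right[OF W X Y]
      frob_uminus_right[OF W X] frob_uminus_right[OF W Y] by simp
  thus ?thesis using le unfolding Fobj_def by simp
qed

lemma top_eigenvector_subgradient:
  assumes Wb: "psd n Wb" "mtrace Wb = 1" and P: "P \<in> carrier_mat n k" "transpose_mat P * P = 1\<^sub>m k"
    and C: "symm n C" and \<rho>: "0 < \<rho>" and n: "0 < n" and Xs: "symm n Xs"
    and v: "v \<in> colspace P" "v \<in> carrier_vec n" "v \<bullet> v = 1"
    and eig: "(- Xs) *\<^sub>v v = \<mu> \<cdot>\<^sub>v v" and top: "lmax (- Xs) \<le> \<mu>"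
  shows "let g = (if lmax (- Xs) > 0 then C - \<rho> \<cdot>\<^sub>m outer v else C) in
       (\<forall>X. symm n X \<longrightarrow> Fhat \<rho> C Wb P X \<ge> Fobj \<rho> C Xs + frob g (X - Xs))
     \<and> (\<forall>X. symm n X \<longrightarrow> Fobj \<rho> C X \<ge> Fobj \<rho> C Xs + frob g (X - Xs))"
proof -
  define W where "W = (if lmax (- Xs) > 0 then \<rho> \<cdot>\<^sub>m outer v else 0\<^sub>m n n)"
  have Cc: "C \<in> carrier_mat n n" and Xsc: "Xs \<in> carrier_mat n n" using C Xs symm_carrier by auto
  have Wc: "W \<in> carrier_mat n n" unfolding W_def using v by simp
  have g: "(if lmax (- Xs) > 0 then C - \<rho> \<cdot>\<^sub>m outer v else C) = C - W"
    unfolding W_def using Cc by auto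
  have W_in: "W \<in> What \<rho> Wb P"
    unfolding W_def using outer_in_What[OF psd_carrier[OF Wb(1)] P v] zero_in_What[OF psd_carrier[OF Wb(1)] P(1)] \<rho>
    by simp
  have "\<rho> * max (lmax (- Xs)) 0 \<le> frob W (- Xs)"
  proof (cases "lmax (- Xs) > 0")
    case True
    have "frob (outer v) (- Xs) = \<mu>" using frob_outer[OF v(2)] Xsc eig v by simp
    thus ?thesis unfolding W_def using True top \<rho> frob_smult_left[OF outer_carrier[OF v(2)], of "- Xs" \<rho>] Xsc
      by simp
  qed (use Xsc frob_zero_left in \<open>simp add: W_def\<close>)
  hence lin: "Fobj \<rho> C Xs + frob (C - W) (X - Xs) \<le> frob C X + frob W (- X)" if "symm n X" for X
    by (rule Fobj_linearization_le[OF Cc Wc symm_carrier[OF that] Xsc])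
  show ?thesis unfolding Let_def g
    using lin Fhat_ge_linear[OF Wb P _ n W_in] Fhat_le_Fobj[OF Wb P _ n less_imp_le[OF \<rho>]]
    by (meson order_trans)
qed

lemma aggregate_in_What:
  assumes Wb: "Wb \<in> carrier_mat n n"
    and P: "P \<in> carrier_mat n r" "transpose_mat P * P = 1\<^sub>m r"
    and Q: "Q1 \<in> carrier_mat r k1" "Q2 \<in> carrier_mat r k2" "transpose_mat (hcat Q1 Q2) * hcat Q1 Q2 = 1\<^sub>m (k1 + k2)"
    and \<Sigma>: "psd k1 \<Sigma>1" "\<Sigma>2 \<in> carrier_mat k2 k2"
    and P1: "P1 \<in> carrier_mat n k" "transpose_mat P1 * P1 = 1\<^sub>m k" and cols: "\<forall>j<k1. col (P * Q1) j \<in> colspace P1"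
    and \<gamma>: "0 \<le> \<gamma>" "\<gamma> + mtrace \<Sigma>1 + mtrace \<Sigma>2 \<le> \<rho>" and pos: "0 < \<gamma> + mtrace \<Sigma>2"
  shows "\<gamma> \<cdot>\<^sub>m Wb + P * (Q1 * \<Sigma>1 * transpose_mat Q1 + Q2 * \<Sigma>2 * transpose_mat Q2) * transpose_mat P
    \<in> What \<rho> ((1 / (\<gamma> + mtrace \<Sigma>2)) \<cdot>\<^sub>m (\<gamma> \<cdot>\<^sub>m Wb + P * Q2 * \<Sigma>2 * transpose_mat Q2 * transpose_mat P)) P1"
proof -
  define c where "c = \<gamma> + mtrace \<Sigma>2"
  define M where "M = \<gamma> \<cdot>\<^sub>m Wb + (P * Q2) * \<Sigma>2 * transpose_mat (P * Q2)"
  have \<Sigma>1c: "\<Sigma>1 \<in> carrier_mat k1 k1" by (rule psd_carrier[OF \<Sigma>(1)])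
  have Pt: "transpose_mat P \<in> carrier_mat r n" using P by simp
  have X1: "Q1 * \<Sigma>1 * transpose_mat Q1 \<in> carrier_mat r r" and X2: "Q2 * \<Sigma>2 * transpose_mat Q2 \<in> carrier_mat r r"
    using Q \<Sigma>1c \<Sigma> by auto
  have "P * (Q1 * \<Sigma>1 * transpose_mat Q1 + Q2 * \<Sigma>2 * transpose_mat Q2) * transpose_mat P
      = P * (Q1 * \<Sigma>1 * transpose_mat Q1) * transpose_mat P + P * (Q2 * \<Sigma>2 * transpose_mat Q2) * transpose_mat P"
    using P(1) X1 X2 Pt
    by (simp add: mult_add_distrib_mat[of _ n r] add_mult_distrib_mat[of _ n r] del: assoc_mult_mat)
  also have "\<dots> = (P * Q1) * \<Sigma>1 * transpose_mat (P * Q1) + (P * Q2) * \<Sigma>2 * transpose_mat (P * Q2)"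
    using sandwich_assoc[OF P(1) Q(1) \<Sigma>1c Pt] sandwich_assoc[OF P(1) Q(2) \<Sigma>(2) Pt]
    by (simp add: transpose_mult[OF P(1) Q(1)] transpose_mult[OF P(1) Q(2)])
  finally have "\<gamma> \<cdot>\<^sub>m Wb + P * (Q1 * \<Sigma>1 * transpose_mat Q1 + Q2 * \<Sigma>2 * transpose_mat Q2) * transpose_mat P
      = c \<cdot>\<^sub>m ((1 / c) \<cdot>\<^sub>m M) + (P * Q1) * \<Sigma>1 * transpose_mat (P * Q1)"
    unfolding M_def using Wb P Q \<Sigma>1c \<Sigma> pos by (intro eq_matI) (auto simp: c_def)
  moreover have "c \<cdot>\<^sub>m ((1 / c) \<cdot>\<^sub>m M) + (P * Q1) * \<Sigma>1 * transpose_mat (P * Q1) \<in> What \<rho> ((1 / c) \<cdot>\<^sub>m M) P1"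
  proof (rule congruence_in_What[OF _ P1 _ _ cols \<Sigma>(1)])
    have "(P * Q2) * \<Sigma>2 * transpose_mat (P * Q2) \<in> carrier_mat n n"
      using mult_carrier_mat[OF P(1) Q(2)] \<Sigma>(2) by (meson mult_carrier_mat transpose_carrier_mat)
    thus "(1 / c) \<cdot>\<^sub>m M \<in> carrier_mat n n" unfolding M_def using Wb by simp
    show "P * Q1 \<in> carrier_mat n k1" using P Q by simp
    show "transpose_mat (P * Q1) * (P * Q1) = 1\<^sub>m k1"
      using gram_mult_orthonormal_left[OF P Q(1)] hcat_orthonormal_split(1)[OF Q] by simp
    show "0 \<le> c" "c + mtrace \<Sigma>1 \<le> \<rho>" unfolding c_def using pos \<gamma> by simp_all
  qed
  ultimately show ?thesis
    unfolding M_def c_def using congruence_mult_assoc[OF P(1) Q(2) \<Sigma>(2)] by simp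
qed

lemma first_column_top_eigenvector:
  assumes M: "symm n M" and V: "V \<in> carrier_mat n rc" "transpose_mat V * V = 1\<^sub>m rc" "1 \<le> rc"
    and V_eig: "\<exists>U \<mu>. U \<in> carrier_mat n n \<and> transpose_mat U * U = 1\<^sub>m n
        \<and> (\<forall>j<n. M *\<^sub>v col U j = \<mu> j \<cdot>\<^sub>v col U j)
        \<and> (\<forall>i j. i \<le> j \<longrightarrow> j < n \<longrightarrow> \<mu> j \<le> \<mu> i)
        \<and> (\<forall>j<rc. col V j = col U j)"
  shows "0 < n" "col V 0 \<in> carrier_vec n" "col V 0 \<bullet> col V 0 = 1"
    "\<exists>\<mu>. M *\<^sub>v col V 0 = \<mu> \<cdot>\<^sub>v col V 0 \<and> lmax M \<le> \<mu>"
proof -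
  have rc: "0 < rc" using V(3) by simp
  show v: "col V 0 \<in> carrier_vec n" using V(1) rc by simp
  show vv: "col V 0 \<bullet> col V 0 = 1" using index_transpose_mult[OF V(1) V(1) rc rc] V(2) rc by simp
  show n: "0 < n"
  proof (rule ccontr)
    assume "\<not> 0 < n"
    hence "col V 0 \<bullet> col V 0 = 0" using V(1) by (simp add: scalar_prod_def)
    thus False using vv by simp
  qed
  obtain U \<mu> where U: "U \<in> carrier_mat n n" "transpose_mat U * U = 1\<^sub>m n"
    and eig: "\<forall>j<n. M *\<^sub>v col U j = \<mu> j \<cdot>\<^sub>v col U j"
    and ord: "\<forall>i j. i \<le> j \<longrightarrow> j < n \<longrightarrow> \<mu> j \<le> \<mu> i" and VU: "\<forall>j<rc. col V j = col U j"
    using V_eig by blast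
  have "M *\<^sub>v col V 0 = \<mu> 0 \<cdot>\<^sub>v col V 0" using eig VU n rc by simp
  moreover have "lmax M \<le> \<mu> 0" by (rule lmax_le_top_eigenvalue[OF M n U eig ord])
  ultimately show "\<exists>\<mu>. M *\<^sub>v col V 0 = \<mu> \<cdot>\<^sub>v col V 0 \<and> lmax M \<le> \<mu>" by blast
qed

theorem mainTheorem5:
  fixes n m r rp rc :: nat
    and \<rho> \<alpha> \<gamma>s :: real
    and b ys :: "real vec"
    and C \<Omega> Wb P Ws Ss Q1 Q2 \<Sigma>1 \<Sigma>2 Xs V P1 :: "real mat"
    and A :: "nat \<Rightarrow> real mat"
  assumes C: "symm n C"
    and Ai: "\<forall>i<m. symm n (A i)"
    and Aindep: "\<forall>y\<in>carrier_vec m. Astar n m A y = 0\<^sub>m n n \<longrightarrow> y = 0\<^sub>v m"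
    and b: "b \<in> carrier_vec m"
    and rho: "\<rho> > 0" and alpha: "\<alpha> > 0"
    and Omega: "symm n \<Omega>"
    and Wb: "psd n Wb" "mtrace Wb = 1"
    and P: "P \<in> carrier_mat n r" "transpose_mat P * P = 1\<^sub>m r"
    and rp: "rp \<le> r" and rc: "rc \<ge> 1"
    and Ws_in: "Ws \<in> What \<rho> Wb P" and ys_in: "ys \<in> carrier_vec m"
    and Ws_min: "\<forall>W \<in> What \<rho> Wb P. \<forall>y \<in> carrier_vec m.
        frob (Ws - C) \<Omega> - (b - Aop m A \<Omega>) \<bullet> ys + 1 / (2 * \<alpha>) * (fnorm (Ws - C + Astar n m A ys))\<^sup>2
        \<le> frob (W - C) \<Omega> - (b - Aop m A \<Omega>) \<bullet> y + 1 / (2 * \<alpha>) * (fnorm (W - C + Astar n m A y))\<^sup>2"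
    and Ws_eq: "Ws = \<gamma>s \<cdot>\<^sub>m Wb + P * Ss * transpose_mat P"
    and Ss: "psd r Ss" "\<gamma>s \<ge> 0" "\<gamma>s + mtrace Ss \<le> \<rho>"
    and Xs: "Xs = \<Omega> + (1 / \<alpha>) \<cdot>\<^sub>m (Ws - C + Astar n m A ys)"
    and Q: "Q1 \<in> carrier_mat r rp" "Q2 \<in> carrier_mat r (r - rp)"
      "transpose_mat (hcat Q1 Q2) * hcat Q1 Q2 = 1\<^sub>m r"
    and Sig: "\<Sigma>1 \<in> carrier_mat rp rp" "\<Sigma>2 \<in> carrier_mat (r - rp) (r - rp)"
      "diagonal \<Sigma>1" "diagonal \<Sigma>2"
      "\<forall>i<rp. \<forall>j<r - rp. \<Sigma>2 $$ (j, j) \<le> \<Sigma>1 $$ (i, i)"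
    and Ss_eig: "Ss = Q1 * \<Sigma>1 * transpose_mat Q1 + Q2 * \<Sigma>2 * transpose_mat Q2"
    and V: "V \<in> carrier_mat n rc" "transpose_mat V * V = 1\<^sub>m rc"
    and V_eig: "\<exists>U \<mu>. U \<in> carrier_mat n n \<and> transpose_mat U * U = 1\<^sub>m n
        \<and> (\<forall>j<n. (- Xs) *\<^sub>v col U j = \<mu> j \<cdot>\<^sub>v col U j)
        \<and> (\<forall>i j. i \<le> j \<longrightarrow> j < n \<longrightarrow> \<mu> j \<le> \<mu> i)
        \<and> (\<forall>j<rc. col V j = col U j)"
    and P1: "P1 \<in> carrier_mat n (dim_col P1)" "transpose_mat P1 * P1 = 1\<^sub>m (dim_col P1)"
      "colspace P1 = colspace (hcat V (P * Q1))"
    and pos: "\<gamma>s + mtrace \<Sigma>2 > 0"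
  shows
    "(\<forall>X. symm n X \<longrightarrow>
        Fhat \<rho> C ((1 / (\<gamma>s + mtrace \<Sigma>2)) \<cdot>\<^sub>m
           (\<gamma>s \<cdot>\<^sub>m Wb + P * Q2 * \<Sigma>2 * transpose_mat Q2 * transpose_mat P)) P1 X
        \<le> Fobj \<rho> C X)
   \<and> (let g = (if lmax (- Xs) > 0 then C - \<rho> \<cdot>\<^sub>m outer (col V 0) else C) in
       (\<forall>X. symm n X \<longrightarrow>
          Fhat \<rho> C ((1 / (\<gamma>s + mtrace \<Sigma>2)) \<cdot>\<^sub>m
             (\<gamma>s \<cdot>\<^sub>m Wb + P * Q2 * \<Sigma>2 * transpose_mat Q2 * transpose_mat P)) P1 X
          \<ge> Fobj \<rho> C Xs + frob g (X - Xs))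
       \<and> (\<forall>X. symm n X \<longrightarrow> Fobj \<rho> C X \<ge> Fobj \<rho> C Xs + frob g (X - Xs)))
   \<and> (\<forall>X. symm n X \<longrightarrow> Aop m A X = b \<longrightarrow>
        Fhat \<rho> C ((1 / (\<gamma>s + mtrace \<Sigma>2)) \<cdot>\<^sub>m
           (\<gamma>s \<cdot>\<^sub>m Wb + P * Q2 * \<Sigma>2 * transpose_mat Q2 * transpose_mat P)) P1 X
        \<ge> Fhat \<rho> C Wb P Xs + frob (\<alpha> \<cdot>\<^sub>m (\<Omega> - Xs)) (X - Xs))"
proof -
  let ?Wb1 = "(1 / (\<gamma>s + mtrace \<Sigma>2)) \<cdot>\<^sub>m (\<gamma>s \<cdot>\<^sub>m Wb + P * Q2 * \<Sigma>2 * transpose_mat Q2 * transpose_mat P)"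
  have Q': "transpose_mat (hcat Q1 Q2) * hcat Q1 Q2 = 1\<^sub>m (rp + (r - rp))" using Q(3) rp by simp
  note \<Sigma> = psd_orthonormal_split[OF Ss(1) Ss_eig Q(1,2) Q' Sig(1,2)]
  have Wb1: "psd n ?Wb1" "mtrace ?Wb1 = 1"
    using normalized_aggregate_psd_mtrace[OF Wb _ _ \<Sigma>(2) Ss(2) pos, of "P * Q2"] P Q
      gram_mult_orthonormal_left[OF P Q(2)] hcat_orthonormal_split(2)[OF Q(1,2) Q']
      congruence_mult_assoc[OF P(1) Q(2) Sig(2)] by simp_all
  have sXs: "symm n Xs" unfolding Xs using What_psd_mtrace_le(1)[OF Wb P Ws_in]
    by (intro symm_add symm_smult symm_minus Omega C symm_Astar Ai psd_symm)
  note v = first_column_top_eigenvector[OF symm_uminus[OF sXs] V rc V_eig]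
  have vP1: "col V 0 \<in> colspace P1" using colspace_hcat_left[OF V(1) _ , of "P * Q1" rp 0] P(1) Q(1) rc P1(3) by simp
  have PQ1: "\<forall>j<rp. col (P * Q1) j \<in> colspace P1"
    unfolding P1(3) using colspace_hcat_right[OF V(1) mult_carrier_mat[OF P(1) Q(1)]] by blast
  have Ws_new: "Ws \<in> What \<rho> ?Wb1 P1"
    unfolding Ws_eq Ss_eig using aggregate_in_What[OF psd_carrier[OF Wb(1)] P Q(1,2) Q' \<Sigma>(1) Sig(2) P1(1,2) PQ1]
      Ss(2,3) \<Sigma>(3) pos by simp
  show ?thesis
  proof (intro conjI allI impI)
    show "Fhat \<rho> C ?Wb1 P1 X \<le> Fobj \<rho> C X" if "symm n X" for X
      using Fhat_le_Fobj[OF Wb1 P1(1,2) that v(1)] rho by simp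
    show "let g = (if lmax (- Xs) > 0 then C - \<rho> \<cdot>\<^sub>m outer (col V 0) else C) in
       (\<forall>X. symm n X \<longrightarrow> Fhat \<rho> C ?Wb1 P1 X \<ge> Fobj \<rho> C Xs + frob g (X - Xs))
       \<and> (\<forall>X. symm n X \<longrightarrow> Fobj \<rho> C X \<ge> Fobj \<rho> C Xs + frob g (X - Xs))"
      using v(4) top_eigenvector_subgradient[OF Wb1 P1(1,2) C rho v(1) sXs vP1 v(2,3)] by blast
    show "Fhat \<rho> C Wb P Xs + frob (\<alpha> \<cdot>\<^sub>m (\<Omega> - Xs)) (X - Xs) \<le> Fhat \<rho> C ?Wb1 P1 X"
      if "symm n X" "Aop m A X = b" for X
      using prox_linearization[OF Wb P C Ai b Omega alpha Ws_in ys_in Ws_min Xs that]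
        Fhat_ge_linear[OF Wb1 P1(1,2) that(1) v(1) Ws_new] by simp
  qed
qed

end
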